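(* Let $A$ be a finite-dimensional basic connected hereditary algebra over an algebraically closed field and $A'$ its right repetitive algebra. Let $L$ be an indecomposable $A'$-module and $0\to L\xrightarrow{f}I\xrightarrow{g}N\to0$ a short exact sequence of $A'$-modules with $f$ an injective envelope, $I$ projective-injective and $N\ne0$. Then (1) $g:I\to N$ is a projective cover in $\mathrm{mod}\,A'$, and (2) $N$ is indecomposable.
   Context: Modules are finitely generated right modules; $DA=\mathrm{Hom}_k(A,k)$. The right repetitive algebra $A'$ is the algebra of $\mathbb{N}\times\mathbb{N}$ lower triangular matrices with finitely many nonzero entries, entry $(i,i)$ in $A$ ($i\ge0$), entry $(i,i-1)$ in $DA$ ($i\ge1$), others zero, multiplication via the bimodule actions of $A$ on $DA$ and the zero map $DA\otimes_A DA\to0$. *)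

theory Defs
  imports "HOL-Computational_Algebra.Polynomial"
begin

definition alg_closed_field :: "'k::field itself \<Rightarrow> bool" where
  "alg_closed_field _ \<longleftrightarrow> (\<forall>p::'k poly. degree p > 0 \<longrightarrow> (\<exists>x. poly p x = 0))"

definition vsum :: "('v \<Rightarrow> 'v \<Rightarrow> 'v) \<Rightarrow> 'v \<Rightarrow> 'v list \<Rightarrow> 'v" where
  "vsum add z xs = foldr add xs z"

definition kvs :: "'v set \<Rightarrow> ('v \<Rightarrow> 'v \<Rightarrow> 'v) \<Rightarrow> 'v \<Rightarrow> ('k::field \<Rightarrow> 'v \<Rightarrow> 'v) \<Rightarrow> bool" where
  "kvs V add z sc \<longleftrightarrow> z \<in> V \<and> (\<forall>x\<in>V. \<forall>y\<in>V. add x y \<in> V) \<and> (\<forall>c. \<forall>x\<in>V. sc c x \<in> V) \<and>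
    (\<forall>x\<in>V. \<forall>y\<in>V. \<forall>w\<in>V. add (add x y) w = add x (add y w)) \<and>
    (\<forall>x\<in>V. \<forall>y\<in>V. add x y = add y x) \<and> (\<forall>x\<in>V. add z x = x) \<and>
    (\<forall>x\<in>V. add x (sc (-1) x) = z) \<and>
    (\<forall>c d. \<forall>x\<in>V. sc c (sc d x) = sc (c * d) x) \<and> (\<forall>x\<in>V. sc 1 x = x) \<and>
    (\<forall>c. \<forall>x\<in>V. \<forall>y\<in>V. sc c (add x y) = add (sc c x) (sc c y)) \<and>
    (\<forall>c d. \<forall>x\<in>V. sc (c + d) x = add (sc c x) (sc d x))"

record ('k, 'a) kalg =
  acar :: "'a set"
  aadd :: "'a \<Rightarrow> 'a \<Rightarrow> 'a"
  amul :: "'a \<Rightarrow> 'a \<Rightarrow> 'a"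
  azero :: "'a"
  asmult :: "'k \<Rightarrow> 'a \<Rightarrow> 'a"

record ('k, 'a) ualg = "('k, 'a) kalg" +
  aone :: "'a"

definition is_kalg :: "('k::field, 'a, 'b) kalg_scheme \<Rightarrow> bool" where
  "is_kalg A \<longleftrightarrow> kvs (acar A) (aadd A) (azero A) (asmult A) \<and>
    (\<forall>x\<in>acar A. \<forall>y\<in>acar A. amul A x y \<in> acar A) \<and>
    (\<forall>x\<in>acar A. \<forall>y\<in>acar A. \<forall>z\<in>acar A. amul A (amul A x y) z = amul A x (amul A y z)) \<and>
    (\<forall>x\<in>acar A. \<forall>y\<in>acar A. \<forall>z\<in>acar A.
        amul A x (aadd A y z) = aadd A (amul A x y) (amul A x z) \<and>
        amul A (aadd A x y) z = aadd A (amul A x z) (amul A y z)) \<and>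
    (\<forall>c. \<forall>x\<in>acar A. \<forall>y\<in>acar A.
        amul A (asmult A c x) y = asmult A c (amul A x y) \<and>
        amul A x (asmult A c y) = asmult A c (amul A x y))"

definition is_ualg :: "('k::field, 'a, 'b) ualg_scheme \<Rightarrow> bool" where
  "is_ualg A \<longleftrightarrow> is_kalg A \<and> aone A \<in> acar A \<and>
    (\<forall>x\<in>acar A. amul A (aone A) x = x \<and> amul A x (aone A) = x)"

definition fd_alg :: "('k::field, 'a, 'b) ualg_scheme \<Rightarrow> bool" where
  "fd_alg A \<longleftrightarrow> is_ualg A \<and> (\<exists>bs. set bs \<subseteq> acar A \<and>
     (\<forall>x\<in>acar A. \<exists>cs::'k list. length cs = length bs \<and>
        x = vsum (aadd A) (azero A) (map (\<lambda>(c, b). asmult A c b) (zip cs bs))))"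

record ('k, 'r, 'm) rmod =
  mcar :: "'m set"
  madd :: "'m \<Rightarrow> 'm \<Rightarrow> 'm"
  mzero :: "'m"
  msmult :: "'k \<Rightarrow> 'm \<Rightarrow> 'm"
  mact :: "'m \<Rightarrow> 'r \<Rightarrow> 'm"

definition is_rmod :: "('k::field, 'r, 'b) kalg_scheme \<Rightarrow> ('k, 'r, 'm) rmod \<Rightarrow> bool" where
  "is_rmod R M \<longleftrightarrow> kvs (mcar M) (madd M) (mzero M) (msmult M) \<and>
    (\<forall>m\<in>mcar M. \<forall>r\<in>acar R. mact M m r \<in> mcar M) \<and>
    (\<forall>m\<in>mcar M. \<forall>r\<in>acar R. \<forall>s\<in>acar R.
        mact M m (aadd R r s) = madd M (mact M m r) (mact M m s) \<and>
        mact M (mact M m r) s = mact M m (amul R r s)) \<and>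
    (\<forall>m\<in>mcar M. \<forall>n\<in>mcar M. \<forall>r\<in>acar R. mact M (madd M m n) r = madd M (mact M m r) (mact M n r)) \<and>
    (\<forall>c. \<forall>m\<in>mcar M. \<forall>r\<in>acar R.
        mact M (msmult M c m) r = msmult M c (mact M m r) \<and>
        mact M m (asmult R c r) = msmult M c (mact M m r))"

text \<open>Finitely generated right module (every element is R-combination
  of finitely many generators; this also gives unitarity M = MR).\<close>
definition fg_rmod :: "('k::field, 'r, 'b) kalg_scheme \<Rightarrow> ('k, 'r, 'm) rmod \<Rightarrow> bool" where
  "fg_rmod R M \<longleftrightarrow> is_rmod R M \<and> (\<exists>gs. set gs \<subseteq> mcar M \<and>
     (\<forall>m\<in>mcar M. \<exists>rs. length rs = length gs \<and> set rs \<subseteq> acar R \<and>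
        m = vsum (madd M) (mzero M) (map (\<lambda>(g, r). mact M g r) (zip gs rs))))"

definition hom :: "('k::field, 'r, 'b) kalg_scheme \<Rightarrow> ('k, 'r, 'm) rmod \<Rightarrow> ('k, 'r, 'n) rmod
    \<Rightarrow> ('m \<Rightarrow> 'n) \<Rightarrow> bool" where
  "hom R M N f \<longleftrightarrow> f ` mcar M \<subseteq> mcar N \<and>
    (\<forall>x\<in>mcar M. \<forall>y\<in>mcar M. f (madd M x y) = madd N (f x) (f y)) \<and>
    (\<forall>c. \<forall>x\<in>mcar M. f (msmult M c x) = msmult N c (f x)) \<and>
    (\<forall>x\<in>mcar M. \<forall>r\<in>acar R. f (mact M x r) = mact N (f x) r)"

definition submod :: "('k::field, 'r, 'b) kalg_scheme \<Rightarrow> ('k, 'r, 'm) rmod \<Rightarrow> 'm set \<Rightarrow> bool" where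
  "submod R M U \<longleftrightarrow> U \<subseteq> mcar M \<and> mzero M \<in> U \<and>
    (\<forall>x\<in>U. \<forall>y\<in>U. madd M x y \<in> U) \<and> (\<forall>c. \<forall>x\<in>U. msmult M c x \<in> U) \<and>
    (\<forall>x\<in>U. \<forall>r\<in>acar R. mact M x r \<in> U)"

definition msum_set :: "('k, 'r, 'm) rmod \<Rightarrow> 'm set \<Rightarrow> 'm set \<Rightarrow> 'm set" where
  "msum_set M U V = {madd M u v | u v. u \<in> U \<and> v \<in> V}"

definition indecomposable :: "('k::field, 'r, 'b) kalg_scheme \<Rightarrow> ('k, 'r, 'm) rmod \<Rightarrow> bool" where
  "indecomposable R M \<longleftrightarrow> mcar M \<noteq> {mzero M} \<and>
    (\<forall>U V. submod R M U \<and> submod R M V \<and> U \<inter> V = {mzero M} \<and> msum_set M U V = mcar M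
        \<longrightarrow> U = {mzero M} \<or> V = {mzero M})"

text \<open>All such modules occurring here are finite-dimensional
  over k, hence isomorphic to modules with carrier inside the type nat => 'k;
  the test modules range over these.\<close>
definition projective_in :: "('k::field, 'r, 'b) kalg_scheme \<Rightarrow> ('k, 'r, 'm) rmod \<Rightarrow> bool" where
  "projective_in R M \<longleftrightarrow> fg_rmod R M \<and>
    (\<forall>(X :: ('k, 'r, nat \<Rightarrow> 'k) rmod) (Y :: ('k, 'r, nat \<Rightarrow> 'k) rmod) p h.
       fg_rmod R X \<and> fg_rmod R Y \<and> hom R X Y p \<and> p ` mcar X = mcar Y \<and> hom R M Y h
       \<longrightarrow> (\<exists>h'. hom R M X h' \<and> (\<forall>m\<in>mcar M. p (h' m) = h m)))"

definition injective_in :: "('k::field, 'r, 'b) kalg_scheme \<Rightarrow> ('k, 'r, 'm) rmod \<Rightarrow> bool" where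
  "injective_in R M \<longleftrightarrow> fg_rmod R M \<and>
    (\<forall>(X :: ('k, 'r, nat \<Rightarrow> 'k) rmod) (Y :: ('k, 'r, nat \<Rightarrow> 'k) rmod) u h.
       fg_rmod R X \<and> fg_rmod R Y \<and> hom R X Y u \<and> inj_on u (mcar X) \<and> hom R X M h
       \<longrightarrow> (\<exists>h'. hom R Y M h' \<and> (\<forall>x\<in>mcar X. h' (u x) = h x)))"

definition essential_submod :: "('k::field, 'r, 'b) kalg_scheme \<Rightarrow> ('k, 'r, 'm) rmod \<Rightarrow> 'm set \<Rightarrow> bool" where
  "essential_submod R M U \<longleftrightarrow> submod R M U \<and>
    (\<forall>V. submod R M V \<and> U \<inter> V = {mzero M} \<longrightarrow> V = {mzero M})"

definition superfluous_submod :: "('k::field, 'r, 'b) kalg_scheme \<Rightarrow> ('k, 'r, 'm) rmod \<Rightarrow> 'm set \<Rightarrow> bool" where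
  "superfluous_submod R M K \<longleftrightarrow> submod R M K \<and>
    (\<forall>U. submod R M U \<and> msum_set M K U = mcar M \<longrightarrow> U = mcar M)"

definition injective_envelope :: "('k::field, 'r, 'b) kalg_scheme \<Rightarrow> ('k, 'r, 'l) rmod
    \<Rightarrow> ('k, 'r, 'e) rmod \<Rightarrow> ('l \<Rightarrow> 'e) \<Rightarrow> bool" where
  "injective_envelope R L E f \<longleftrightarrow> fg_rmod R L \<and> hom R L E f \<and> inj_on f (mcar L) \<and>
    injective_in R E \<and> essential_submod R E (f ` mcar L)"

definition projective_cover :: "('k::field, 'r, 'b) kalg_scheme \<Rightarrow> ('k, 'r, 'p) rmod
    \<Rightarrow> ('k, 'r, 'm) rmod \<Rightarrow> ('p \<Rightarrow> 'm) \<Rightarrow> bool" where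
  "projective_cover R P M g \<longleftrightarrow> fg_rmod R M \<and> hom R P M g \<and> g ` mcar P = mcar M \<and>
    projective_in R P \<and> superfluous_submod R P {x \<in> mcar P. g x = mzero M}"

definition ideal_mod :: "('k, 'a, 'b) kalg_scheme \<Rightarrow> 'a set \<Rightarrow> ('k, 'a, 'a) rmod" where
  "ideal_mod A J = \<lparr>mcar = J, madd = aadd A, mzero = azero A, msmult = asmult A, mact = amul A\<rparr>"

definition iso_mod :: "('k::field, 'r, 'b) kalg_scheme \<Rightarrow> ('k, 'r, 'm) rmod \<Rightarrow> ('k, 'r, 'n) rmod \<Rightarrow> bool" where
  "iso_mod R M N \<longleftrightarrow> (\<exists>f. hom R M N f \<and> bij_betw f (mcar M) (mcar N))"

definition idem :: "('k, 'a, 'b) kalg_scheme \<Rightarrow> 'a \<Rightarrow> bool" where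
  "idem A e \<longleftrightarrow> e \<in> acar A \<and> amul A e e = e"

definition orth :: "('k, 'a, 'b) kalg_scheme \<Rightarrow> 'a \<Rightarrow> 'a \<Rightarrow> bool" where
  "orth A e f \<longleftrightarrow> amul A e f = azero A \<and> amul A f e = azero A"

definition primitive_idem :: "('k, 'a, 'b) kalg_scheme \<Rightarrow> 'a \<Rightarrow> bool" where
  "primitive_idem A e \<longleftrightarrow> idem A e \<and> e \<noteq> azero A \<and>
    \<not> (\<exists>e1 e2. idem A e1 \<and> idem A e2 \<and> e1 \<noteq> azero A \<and> e2 \<noteq> azero A \<and> orth A e1 e2 \<and>
              e = aadd A e1 e2)"

definition complete_prim_orth :: "('k, 'a, 'b) ualg_scheme \<Rightarrow> 'a list \<Rightarrow> bool" where
  "complete_prim_orth A es \<longleftrightarrow> (\<forall>i<length es. primitive_idem A (es ! i)) \<and>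
    (\<forall>i<length es. \<forall>j<length es. i \<noteq> j \<longrightarrow> orth A (es ! i) (es ! j)) \<and>
    vsum (aadd A) (azero A) es = aone A"

definition basic_alg :: "('k::field, 'a, 'b) ualg_scheme \<Rightarrow> bool" where
  "basic_alg A \<longleftrightarrow> (\<exists>es. complete_prim_orth A es \<and>
    (\<forall>i<length es. \<forall>j<length es. i \<noteq> j \<longrightarrow>
       \<not> iso_mod A (ideal_mod A {amul A (es ! i) x | x. x \<in> acar A})
                   (ideal_mod A {amul A (es ! j) x | x. x \<in> acar A})))"

text \<open>Connected: A is nonzero and not a product of two nonzero algebras, i.e.
  0 and 1 are the only central idempotents.\<close>
definition connected_alg :: "('k, 'a, 'b) ualg_scheme \<Rightarrow> bool" where
  "connected_alg A \<longleftrightarrow> aone A \<noteq> azero A \<and>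
    (\<forall>c\<in>acar A. (\<forall>x\<in>acar A. amul A c x = amul A x c) \<and> amul A c c = c
        \<longrightarrow> c = azero A \<or> c = aone A)"

definition hereditary_alg :: "('k::field, 'a, 'b) ualg_scheme \<Rightarrow> bool" where
  "hereditary_alg A \<longleftrightarrow> (\<forall>J. submod A (ideal_mod A (acar A)) J \<longrightarrow> projective_in A (ideal_mod A J))"

definition dual :: "('k::field, 'a, 'b) kalg_scheme \<Rightarrow> ('a \<Rightarrow> 'k) set" where
  "dual A = {\<phi>. (\<forall>x\<in>acar A. \<forall>y\<in>acar A. \<phi> (aadd A x y) = \<phi> x + \<phi> y) \<and>
               (\<forall>c. \<forall>x\<in>acar A. \<phi> (asmult A c x) = c * \<phi> x) \<and>
               (\<forall>x. x \<notin> acar A \<longrightarrow> \<phi> x = 0)}"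

definition dlact :: "('k::field, 'a, 'b) kalg_scheme \<Rightarrow> 'a \<Rightarrow> ('a \<Rightarrow> 'k) \<Rightarrow> ('a \<Rightarrow> 'k)" where
  "dlact A a \<psi> = (\<lambda>x. if x \<in> acar A then \<psi> (amul A x a) else 0)"

definition dract :: "('k::field, 'a, 'b) kalg_scheme \<Rightarrow> ('a \<Rightarrow> 'k) \<Rightarrow> 'a \<Rightarrow> ('a \<Rightarrow> 'k)" where
  "dract A \<phi> b = (\<lambda>x. if x \<in> acar A then \<phi> (amul A b x) else 0)"

type_synonym ('k, 'a) rep = "(nat \<Rightarrow> 'a) \<times> (nat \<Rightarrow> 'a \<Rightarrow> 'k)"

text \<open>An element (a, phi) of A' is the N x N lower triangular matrix with
  entry a i at (i,i) and phi i at (i,i-1) (i >= 1; phi 0 = 0), finitely many nonzero.\<close>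
definition rep_alg :: "('k::field, 'a, 'b) kalg_scheme \<Rightarrow> ('k, ('k, 'a) rep) kalg" where
  "rep_alg A = \<lparr>
     acar = {(a, \<phi>). (\<forall>i. a i \<in> acar A) \<and> finite {i. a i \<noteq> azero A} \<and>
                     (\<forall>i. \<phi> i \<in> dual A) \<and> \<phi> 0 = (\<lambda>x. 0) \<and> finite {i. \<phi> i \<noteq> (\<lambda>x. 0)}},
     aadd = (\<lambda>(a, \<phi>) (b, \<psi>). (\<lambda>i. aadd A (a i) (b i), \<lambda>i x. \<phi> i x + \<psi> i x)),
     amul = (\<lambda>(a, \<phi>) (b, \<psi>). (\<lambda>i. amul A (a i) (b i),
               \<lambda>i. if i = 0 then (\<lambda>x. 0)
                   else (\<lambda>x. dlact A (a i) (\<psi> i) x + dract A (\<phi> i) (b (i - 1)) x))),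
     azero = (\<lambda>i. azero A, \<lambda>i x. 0),
     asmult = (\<lambda>c (a, \<phi>). (\<lambda>i. asmult A c (a i), \<lambda>i x. c * \<phi> i x)) \<rparr>"

end

theory Submission
  imports Defs "HOL-Library.Function_Algebras"
begin

(* Write K = f(L), an essential submodule of I.  Any endomorphism h of I with h(K) \<subseteq> K
   restricts to an endomorphism of L, which by Fitting's lemma is nilpotent or bijective; in
   the bijective case a power of h is injective (K is essential), hence split injective (I is
   injective), hence bijective (K is essential again).
   (1) If U + K = I, projectivity of I gives h : I \<rightarrow> U with g h = g.  Then id - h maps I into
   K; it cannot be bijective since N \<noteq> 0, so it is nilpotent, and then U = I.
   (2) If N = N1 \<oplus> N2, lift the two projections to h1 + h2 = id on I.  A bijective power of hi
   would force N = Ni, so both restrictions to L are nilpotent; but they add up to id on L \<noteq> 0.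
   Fitting's lemma needs L to be finite-dimensional: a finitely generated A'-module is unital
   over some idempotent diag(1,...,1,0,...), so it is spanned by finitely many elements.  This
   also justifies testing projectivity and injectivity only on modules with carrier in
   nat \<Rightarrow> k. *)

primrec vsum_upto :: "('v \<Rightarrow> 'v \<Rightarrow> 'v) \<Rightarrow> 'v \<Rightarrow> (nat \<Rightarrow> 'v) \<Rightarrow> nat \<Rightarrow> 'v" where
  "vsum_upto add z f 0 = z"
| "vsum_upto add z f (Suc n) = add (vsum_upto add z f n) (f n)"

locale kvec =
  fixes V :: "'v set" and add :: "'v \<Rightarrow> 'v \<Rightarrow> 'v" and z :: 'v and sc :: "'k::field \<Rightarrow> 'v \<Rightarrow> 'v"
  assumes kvs: "kvs V add z sc"
begin

lemma zero_closed[simp]: "z \<in> V"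
  and a_closed[simp]: "x \<in> V \<Longrightarrow> y \<in> V \<Longrightarrow> add x y \<in> V"
  and smult_closed[simp]: "x \<in> V \<Longrightarrow> sc c x \<in> V"
  and a_assoc: "x \<in> V \<Longrightarrow> y \<in> V \<Longrightarrow> w \<in> V \<Longrightarrow> add (add x y) w = add x (add y w)"
  and a_comm: "x \<in> V \<Longrightarrow> y \<in> V \<Longrightarrow> add x y = add y x"
  and l_zero[simp]: "x \<in> V \<Longrightarrow> add z x = x"
  and r_neg: "x \<in> V \<Longrightarrow> add x (sc (-1) x) = z"
  and smult_assoc: "x \<in> V \<Longrightarrow> sc c (sc d x) = sc (c * d) x"
  and smult_one[simp]: "x \<in> V \<Longrightarrow> sc 1 x = x"
  and smult_r_distr: "x \<in> V \<Longrightarrow> y \<in> V \<Longrightarrow> sc c (add x y) = add (sc c x) (sc c y)"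
  and smult_l_distr: "x \<in> V \<Longrightarrow> sc (c + d) x = add (sc c x) (sc d x)"
  using kvs unfolding kvs_def by auto

lemma r_zero[simp]: "x \<in> V \<Longrightarrow> add x z = x"
  using a_comm[of x z] by simp

lemma a_lcancel: "x \<in> V \<Longrightarrow> y \<in> V \<Longrightarrow> y' \<in> V \<Longrightarrow> add x y = add x y' \<Longrightarrow> y = y'"
  by (metis a_assoc a_comm l_zero r_neg smult_closed)

lemma add_eq_self_imp_zero: "x \<in> V \<Longrightarrow> y \<in> V \<Longrightarrow> add x y = x \<Longrightarrow> y = z"
  using a_lcancel[of x y z] by simp

lemma smult_l_null[simp]: "x \<in> V \<Longrightarrow> sc 0 x = z"
  using smult_l_distr[of x 0 0] add_eq_self_imp_zero[of "sc 0 x" "sc 0 x"] by simp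

lemma smult_r_null[simp]: "sc c z = z"
  using smult_r_distr[of z z c] add_eq_self_imp_zero[of "sc c z" "sc c z"] by simp

definition vdiff :: "'v \<Rightarrow> 'v \<Rightarrow> 'v" where
  "vdiff x y = add x (sc (-1) y)"

lemma vdiff_closed[simp]: "x \<in> V \<Longrightarrow> y \<in> V \<Longrightarrow> vdiff x y \<in> V"
  unfolding vdiff_def by simp

lemma vdiff_self[simp]: "x \<in> V \<Longrightarrow> vdiff x x = z"
  unfolding vdiff_def using r_neg by simp

lemma vdiff_zero[simp]: "x \<in> V \<Longrightarrow> vdiff x z = x"
  unfolding vdiff_def by simp

lemma vdiff_add_cancel: "x \<in> V \<Longrightarrow> y \<in> V \<Longrightarrow> add (vdiff x y) y = x"
  unfolding vdiff_def using a_assoc[of x "sc (-1) y" y] r_neg[of y] a_comm[of y "sc (-1) y"] by simp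

lemma add_vdiff_cancel_left: "x \<in> V \<Longrightarrow> y \<in> V \<Longrightarrow> add y (vdiff x y) = x"
  using vdiff_add_cancel a_comm by simp

lemma add_vdiff_cancel: "x \<in> V \<Longrightarrow> y \<in> V \<Longrightarrow> vdiff (add x y) y = x"
  unfolding vdiff_def using a_assoc[of x y "sc (-1) y"] r_neg[of y] by simp

lemma vdiff_eq_zeroD: "x \<in> V \<Longrightarrow> y \<in> V \<Longrightarrow> vdiff x y = z \<Longrightarrow> x = y"
  using vdiff_add_cancel[of x y] by simp

lemma a_swap_middle: "a \<in> V \<Longrightarrow> b \<in> V \<Longrightarrow> c \<in> V \<Longrightarrow> d \<in> V \<Longrightarrow>
   add (add a b) (add c d) = add (add a c) (add b d)"
  by (metis a_assoc a_comm a_closed)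

lemma vdiff_eq_vdiff_if_add_eq:
  assumes "a \<in> V" "b \<in> V" "a' \<in> V" "b' \<in> V" and "add a b = add a' b'"
  shows "vdiff a a' = vdiff b' b"
proof -
  have "add (vdiff a a') b = b'"
    using assms by (metis a_assoc a_comm add_vdiff_cancel smult_closed vdiff_def)
  then show ?thesis
    using assms add_vdiff_cancel by (metis vdiff_closed)
qed

lemma vsum_upto_closed[simp]: "(\<And>i. i < n \<Longrightarrow> f i \<in> V) \<Longrightarrow> vsum_upto add z f n \<in> V"
  by (induction n) auto

lemma vsum_upto_cong: "(\<And>i. i < n \<Longrightarrow> f i = g i) \<Longrightarrow> vsum_upto add z f n = vsum_upto add z g n"
  by (induction n) auto

lemma vsum_upto_add: "(\<And>i. i < n \<Longrightarrow> f i \<in> V) \<Longrightarrow> (\<And>i. i < n \<Longrightarrow> g i \<in> V) \<Longrightarrow>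
   vsum_upto add z (\<lambda>i. add (f i) (g i)) n = add (vsum_upto add z f n) (vsum_upto add z g n)"
  by (induction n) (auto simp: a_swap_middle)

lemma vsum_upto_smult: "(\<And>i. i < n \<Longrightarrow> f i \<in> V) \<Longrightarrow>
   vsum_upto add z (\<lambda>i. sc c (f i)) n = sc c (vsum_upto add z f n)"
  by (induction n) (auto simp: smult_r_distr)

lemma vsum_upto_zero: "vsum_upto add z (\<lambda>i. z) n = z"
  by (induction n) auto

lemma vsum_upto_Suc_front: "(\<And>i. i < Suc n \<Longrightarrow> f i \<in> V) \<Longrightarrow>
   vsum_upto add z f (Suc n) = add (f 0) (vsum_upto add z (\<lambda>i. f (Suc i)) n)"
proof (induction n)
  case 0 then show ?case by (simp add: a_comm)
next
  case (Suc n)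
  then show ?case by (simp add: a_assoc)
qed

lemma vsum_eq_vsum_upto: "set xs \<subseteq> V \<Longrightarrow> vsum add z xs = vsum_upto add z (\<lambda>i. xs ! i) (length xs)"
proof (induction xs)
  case Nil then show ?case by (simp add: vsum_def)
next
  case (Cons x xs)
  have "vsum_upto add z (\<lambda>i. (x # xs) ! i) (Suc (length xs)) =
      add x (vsum_upto add z (\<lambda>i. xs ! i) (length xs))"
    using Cons.prems by (subst vsum_upto_Suc_front) (auto simp: nth_Cons' subset_iff)
  then show ?case using Cons by (simp add: vsum_def)
qed

end


definition cscale :: "'k::field \<Rightarrow> (nat \<Rightarrow> 'k) \<Rightarrow> (nat \<Rightarrow> 'k)" where
  "cscale a c = (\<lambda>i. a * c i)"

definition unit_coeff :: "nat \<Rightarrow> nat \<Rightarrow> 'k::field" where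
  "unit_coeff t = (\<lambda>i. if i = t then 1 else 0)"

context kvec
begin

definition lin_comb :: "'v list \<Rightarrow> (nat \<Rightarrow> 'k) \<Rightarrow> 'v" where
  "lin_comb ws c = vsum_upto add z (\<lambda>i. sc (c i) (ws ! i)) (length ws)"

definition ksubspace :: "'v set \<Rightarrow> bool" where
  "ksubspace S \<longleftrightarrow> S \<subseteq> V \<and> z \<in> S \<and> (\<forall>x\<in>S. \<forall>y\<in>S. add x y \<in> S) \<and> (\<forall>c. \<forall>x\<in>S. sc c x \<in> S)"

definition spans :: "'v list \<Rightarrow> bool" where
  "spans ws \<longleftrightarrow> set ws \<subseteq> V \<and> (\<forall>x\<in>V. \<exists>c. x = lin_comb ws c)"

lemma nth_closed[simp]: "set ws \<subseteq> V \<Longrightarrow> i < length ws \<Longrightarrow> ws ! i \<in> V"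
  using nth_mem by blast

lemma lin_comb_closed[simp]: "set ws \<subseteq> V \<Longrightarrow> lin_comb ws c \<in> V"
  unfolding lin_comb_def by (auto intro!: vsum_upto_closed)

lemma lin_comb_add: "set ws \<subseteq> V \<Longrightarrow> lin_comb ws (c + d) = add (lin_comb ws c) (lin_comb ws d)"
  unfolding lin_comb_def by (subst vsum_upto_add[symmetric]) (auto intro!: vsum_upto_cong simp: smult_l_distr)

lemma lin_comb_smult: "set ws \<subseteq> V \<Longrightarrow> lin_comb ws (cscale a c) = sc a (lin_comb ws c)"
  unfolding lin_comb_def cscale_def by (subst vsum_upto_smult[symmetric]) (auto intro!: vsum_upto_cong simp: smult_assoc)

lemma lin_comb_zero: "set ws \<subseteq> V \<Longrightarrow> lin_comb ws 0 = z"
proof -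
  assume "set ws \<subseteq> V"
  then have "lin_comb ws 0 = vsum_upto add z (\<lambda>i. z) (length ws)"
    unfolding lin_comb_def by (intro vsum_upto_cong) auto
  then show ?thesis by (simp add: vsum_upto_zero)
qed

lemma lin_comb_sum: "set ws \<subseteq> V \<Longrightarrow> lin_comb ws (\<Sum>i<n. g i) = vsum_upto add z (\<lambda>i. lin_comb ws (g i)) n"
  by (induction n) (auto simp: lin_comb_add lin_comb_zero)

lemma lin_comb_unit_coeff: "set ws \<subseteq> V \<Longrightarrow> t < length ws \<Longrightarrow> lin_comb ws (unit_coeff t) = ws ! t"
proof -
  assume ws: "set ws \<subseteq> V" and t: "t < length ws"
  have "vsum_upto add z (\<lambda>i. sc (unit_coeff t i) (ws ! i)) m = (if t < m then ws ! t else z)"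
    if "m \<le> length ws" for m
    using that
  proof (induction m)
    case (Suc m)
    then show ?case using ws t by (auto simp: unit_coeff_def less_Suc_eq)
  qed simp
  then show ?thesis unfolding lin_comb_def using t by simp
qed

definition lin_span :: "'v list \<Rightarrow> 'v set" where
  "lin_span ws = range (lin_comb ws)"

lemma spans_iff_lin_span: "spans ws \<longleftrightarrow> set ws \<subseteq> V \<and> V \<subseteq> lin_span ws"
  unfolding spans_def lin_span_def by auto

context
  fixes ws assumes ws: "set ws \<subseteq> V"
begin

lemma lin_span_zero: "z \<in> lin_span ws"
  using lin_comb_zero[OF ws] unfolding lin_span_def by (metis rangeI)

lemma lin_span_add: "x \<in> lin_span ws \<Longrightarrow> y \<in> lin_span ws \<Longrightarrow> add x y \<in> lin_span ws"
  unfolding lin_span_def by (auto simp flip: lin_comb_add[OF ws])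

lemma lin_span_smult: "x \<in> lin_span ws \<Longrightarrow> sc c x \<in> lin_span ws"
  unfolding lin_span_def by (auto simp flip: lin_comb_smult[OF ws])

lemma lin_span_base: "x \<in> set ws \<Longrightarrow> x \<in> lin_span ws"
  using lin_comb_unit_coeff[OF ws] unfolding lin_span_def by (metis in_set_conv_nth rangeI)

lemma vsum_upto_in_lin_span: "(\<And>i. i < n \<Longrightarrow> f i \<in> lin_span ws) \<Longrightarrow> vsum_upto add z f n \<in> lin_span ws"
  by (induction n) (simp_all add: lin_span_zero lin_span_add)

lemma lin_comb_in_lin_span: "set us \<subseteq> lin_span ws \<Longrightarrow> lin_comb us c \<in> lin_span ws"
  unfolding lin_comb_def by (intro vsum_upto_in_lin_span lin_span_smult) auto

lemma lin_span_mono: "set us \<subseteq> set ws \<Longrightarrow> lin_span us \<subseteq> lin_span ws"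
  unfolding lin_span_def[of us] using lin_comb_in_lin_span lin_span_base by blast

end

lemma lin_comb_map:
  assumes V': "kvec V' add' z' sc'" and ws: "set ws \<subseteq> V" and F: "F ` V \<subseteq> V'"
    and F_add: "\<And>x y. x \<in> V \<Longrightarrow> y \<in> V \<Longrightarrow> F (add x y) = add' (F x) (F y)"
    and F_smult: "\<And>c x. x \<in> V \<Longrightarrow> F (sc c x) = sc' c (F x)"
  shows "F (lin_comb ws c) = kvec.lin_comb add' z' sc' (map F ws) c"
proof -
  interpret V': kvec V' add' z' sc' by (rule V')
  have "F z \<in> V'" using F by auto
  then have "F z = z'" using F_smult[of z 0] by simp
  then have "F (vsum_upto add z (\<lambda>i. sc (c i) (ws ! i)) m) =
      vsum_upto add' z' (\<lambda>i. sc' (c i) (F (ws ! i))) m" if "m \<le> length ws" for m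
    using that ws by (induction m) (simp_all add: F_add F_smult)
  moreover have "vsum_upto add' z' (\<lambda>i. sc' (c i) (F (ws ! i))) (length ws) =
      kvec.lin_comb add' z' sc' (map F ws) c"
    unfolding V'.lin_comb_def length_map by (rule V'.vsum_upto_cong) simp
  ultimately show ?thesis unfolding lin_comb_def by simp
qed

lemma linear_image_in_lin_span:
  assumes V': "kvec V' add' z' sc'" and bs: "spans bs" and F: "F ` V \<subseteq> V'"
    and F_add: "\<And>x y. x \<in> V \<Longrightarrow> y \<in> V \<Longrightarrow> F (add x y) = add' (F x) (F y)"
    and F_smult: "\<And>c x. x \<in> V \<Longrightarrow> F (sc c x) = sc' c (F x)"
    and W: "set W \<subseteq> V'" and bs_W: "set (map F bs) \<subseteq> set W" and x: "x \<in> V"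
  shows "F x \<in> kvec.lin_span add' z' sc' W"
proof -
  interpret V': kvec V' add' z' sc' by (rule V')
  obtain c where "x = lin_comb bs c" using bs x unfolding spans_def by blast
  moreover have "F (lin_comb bs c) = V'.lin_comb (map F bs) c"
    using bs unfolding spans_def by (intro lin_comb_map[OF V' _ F F_add F_smult]) auto
  moreover have "set (map F bs) \<subseteq> V'.lin_span W" using bs_W V'.lin_span_base[OF W] by blast
  ultimately show ?thesis using V'.lin_comb_in_lin_span[OF W] by simp
qed

lemma ksubspace_vdiff_closed: "ksubspace S \<Longrightarrow> x \<in> S \<Longrightarrow> y \<in> S \<Longrightarrow> vdiff x y \<in> S"
  unfolding ksubspace_def vdiff_def by blast

definition proj_along :: "'v set \<Rightarrow> 'v set \<Rightarrow> 'v \<Rightarrow> 'v" where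
  "proj_along S T y = (SOME a. a \<in> S \<and> (\<exists>b\<in>T. y = add a b))"

context
  fixes S T assumes S: "ksubspace S" and T: "ksubspace T" and int: "S \<inter> T = {z}"
begin

lemma direct_sum_unique:
  assumes "a \<in> S" "a' \<in> S" "b \<in> T" "b' \<in> T" "add a b = add a' b'"
  shows "a = a'"
proof -
  have "S \<subseteq> V" "T \<subseteq> V" using S T unfolding ksubspace_def by auto
  then have "vdiff a a' = vdiff b' b" using assms by (intro vdiff_eq_vdiff_if_add_eq) auto
  moreover have "vdiff a a' \<in> S" "vdiff b' b \<in> T"
    using assms ksubspace_vdiff_closed[OF S] ksubspace_vdiff_closed[OF T] by auto
  ultimately have "vdiff a a' = z" using int by auto
  then show ?thesis using vdiff_eq_zeroD assms \<open>S \<subseteq> V\<close> by auto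
qed

lemma proj_along_add: "a \<in> S \<Longrightarrow> b \<in> T \<Longrightarrow> proj_along S T (add a b) = a"
  unfolding proj_along_def by (rule some_equality) (use direct_sum_unique in blast)+

lemma proj_along_decomp:
  assumes "a \<in> S" "b \<in> T"
  shows "proj_along S T (add a b) \<in> S" "vdiff (add a b) (proj_along S T (add a b)) = b"
  using assms proj_along_add S T add_vdiff_cancel a_comm unfolding ksubspace_def by (auto, metis subsetD)

end

end

locale rmodule =
  fixes R :: "('k::field, 'r, 'b) kalg_scheme" and M :: "('k, 'r, 'm) rmod"
  assumes rmodule: "is_rmod R M"
begin

sublocale kvec "mcar M" "madd M" "mzero M" "msmult M"
  using rmodule unfolding is_rmod_def by unfold_locales auto

lemma act_closed[simp]: "m \<in> mcar M \<Longrightarrow> r \<in> acar R \<Longrightarrow> mact M m r \<in> mcar M"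
  and act_r_distr: "m \<in> mcar M \<Longrightarrow> r \<in> acar R \<Longrightarrow> s \<in> acar R \<Longrightarrow>
    mact M m (aadd R r s) = madd M (mact M m r) (mact M m s)"
  and act_assoc: "m \<in> mcar M \<Longrightarrow> r \<in> acar R \<Longrightarrow> s \<in> acar R \<Longrightarrow>
    mact M (mact M m r) s = mact M m (amul R r s)"
  and act_l_distr: "m \<in> mcar M \<Longrightarrow> n \<in> mcar M \<Longrightarrow> r \<in> acar R \<Longrightarrow>
    mact M (madd M m n) r = madd M (mact M m r) (mact M n r)"
  and act_smult_left: "m \<in> mcar M \<Longrightarrow> r \<in> acar R \<Longrightarrow>
    mact M (msmult M c m) r = msmult M c (mact M m r)"
  and act_smult_right: "m \<in> mcar M \<Longrightarrow> r \<in> acar R \<Longrightarrow>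
    mact M m (asmult R c r) = msmult M c (mact M m r)"
  using rmodule unfolding is_rmod_def by auto

lemma act_zero[simp]: "r \<in> acar R \<Longrightarrow> mact M (mzero M) r = mzero M"
  using act_l_distr[of "mzero M" "mzero M" r]
    add_eq_self_imp_zero[of "mact M (mzero M) r" "mact M (mzero M) r"] by simp

lemma act_vsum_upto: "(\<And>i. i < n \<Longrightarrow> f i \<in> mcar M) \<Longrightarrow> r \<in> acar R \<Longrightarrow>
   mact M (vsum_upto (madd M) (mzero M) f n) r = vsum_upto (madd M) (mzero M) (\<lambda>i. mact M (f i) r) n"
  by (induction n) (auto simp: act_l_distr)

end

lemma fg_rmod_rmodule: "fg_rmod R M \<Longrightarrow> rmodule R M"
  unfolding fg_rmod_def by (simp add: rmodule.intro)

lemma submod_is_rmod: "is_rmod R M \<Longrightarrow> submod R M U \<Longrightarrow> is_rmod R (M\<lparr>mcar := U\<rparr>)"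
  unfolding is_rmod_def submod_def kvs_def by (auto simp: subset_iff)

lemma hom_restrict_domain: "hom R M N f \<Longrightarrow> U \<subseteq> mcar M \<Longrightarrow> hom R (M\<lparr>mcar := U\<rparr>) N f"
  unfolding hom_def by (auto simp: subset_iff)

lemma hom_widen_codomain: "hom R M (N\<lparr>mcar := U\<rparr>) f \<Longrightarrow> U \<subseteq> mcar N \<Longrightarrow> hom R M N f"
  unfolding hom_def by auto

lemma hom_comp: "hom R M N f \<Longrightarrow> hom R N P g \<Longrightarrow> hom R M P (\<lambda>x. g (f x))"
  unfolding hom_def by (auto simp: image_subset_iff)

lemma hom_id: "hom R M M (\<lambda>x. x)"
  unfolding hom_def by auto

lemma hom_funpow: "hom R M M f \<Longrightarrow> hom R M M (f ^^ n)"
  by (induction n) (auto simp: hom_def image_subset_iff)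

lemma hom_funpow_closed: "hom R M M f \<Longrightarrow> x \<in> mcar M \<Longrightarrow> (f ^^ n) x \<in> mcar M"
  using hom_funpow[of R M f n] unfolding hom_def by auto

locale rmodule_pair = M: rmodule R M + N: rmodule R N
  for R :: "('k::field, 'r, 'b) kalg_scheme" and M :: "('k, 'r, 'm) rmod" and N :: "('k, 'r, 'n) rmod"
begin

context
  fixes f assumes f: "hom R M N f"
begin

lemma hom_closed[simp]: "x \<in> mcar M \<Longrightarrow> f x \<in> mcar N"
  and hom_add: "x \<in> mcar M \<Longrightarrow> y \<in> mcar M \<Longrightarrow> f (madd M x y) = madd N (f x) (f y)"
  and hom_smult: "x \<in> mcar M \<Longrightarrow> f (msmult M c x) = msmult N c (f x)"
  and hom_act: "x \<in> mcar M \<Longrightarrow> r \<in> acar R \<Longrightarrow> f (mact M x r) = mact N (f x) r"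
  using f unfolding hom_def by auto

lemma hom_zero[simp]: "f (mzero M) = mzero N"
  using hom_smult[of "mzero M" 0] by simp

lemma hom_vdiff: "x \<in> mcar M \<Longrightarrow> y \<in> mcar M \<Longrightarrow> f (M.vdiff x y) = N.vdiff (f x) (f y)"
  unfolding M.vdiff_def N.vdiff_def by (simp add: hom_add hom_smult)

lemma hom_vsum_upto: "(\<And>i. i < n \<Longrightarrow> g i \<in> mcar M) \<Longrightarrow>
   f (vsum_upto (madd M) (mzero M) g n) = vsum_upto (madd N) (mzero N) (\<lambda>i. f (g i)) n"
  by (induction n) (auto simp: hom_add)

lemma ker_submod: "submod R M {x \<in> mcar M. f x = mzero N}"
  unfolding submod_def by (auto simp: hom_add hom_smult hom_act)

lemma image_submod: "submod R N (f ` mcar M)"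
  unfolding submod_def
proof (intro conjI ballI allI)
  show "mzero N \<in> f ` mcar M" using hom_zero M.zero_closed by (metis image_eqI)
  fix x y assume "x \<in> f ` mcar M" "y \<in> f ` mcar M"
  then show "madd N x y \<in> f ` mcar M" by (auto simp flip: hom_add)
next
  fix c x assume "x \<in> f ` mcar M"
  then show "msmult N c x \<in> f ` mcar M" by (auto simp flip: hom_smult)
next
  fix x r assume "x \<in> f ` mcar M" "r \<in> acar R"
  then show "mact N x r \<in> f ` mcar M" by (auto simp flip: hom_act)
qed auto

lemma hom_inj_iff: "inj_on f (mcar M) \<longleftrightarrow> (\<forall>x\<in>mcar M. f x = mzero N \<longrightarrow> x = mzero M)"
proof
  assume "inj_on f (mcar M)"
  then show "\<forall>x\<in>mcar M. f x = mzero N \<longrightarrow> x = mzero M"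
    by (metis M.zero_closed hom_zero inj_on_def)
next
  assume ker0: "\<forall>x\<in>mcar M. f x = mzero N \<longrightarrow> x = mzero M"
  show "inj_on f (mcar M)"
  proof (rule inj_onI)
    fix x y assume xy: "x \<in> mcar M" "y \<in> mcar M" "f x = f y"
    then have "f (M.vdiff x y) = mzero N" by (simp add: hom_vdiff)
    then have "M.vdiff x y = mzero M" using ker0 xy by simp
    then show "x = y" using M.vdiff_eq_zeroD xy by blast
  qed
qed

end

lemma hom_vdiff_fun: "hom R M N f \<Longrightarrow> hom R M N g \<Longrightarrow> hom R M N (\<lambda>x. N.vdiff (f x) (g x))"
  unfolding hom_def N.vdiff_def
  apply (intro conjI ballI allI)
  subgoal by (auto simp: image_subset_iff)
  subgoal by (clarsimp simp: image_subset_iff N.smult_r_distr N.smult_assoc N.a_swap_middle)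
  subgoal by (clarsimp simp: image_subset_iff N.smult_r_distr N.smult_assoc mult.commute)
  subgoal by (clarsimp simp: image_subset_iff N.act_l_distr N.act_smult_left)
  done

end

lemma hom_funpow_inj_on:
  assumes "hom R M M f" "inj_on f (mcar M)"
  shows "inj_on (f ^^ n) (mcar M)"
proof (induction n)
  case (Suc n)
  have "f ` mcar M \<subseteq> mcar M" using assms(1) unfolding hom_def by blast
  then have "inj_on ((f ^^ n) \<circ> f) (mcar M)"
    using comp_inj_on[OF assms(2) inj_on_subset[OF Suc]] by blast
  then show ?case by (simp add: funpow_Suc_right comp_def del: funpow.simps)
qed simp

section \<open>Finite-dimensional vector spaces\<close>

text \<open>Dimension arguments take place in HOL's vector space of coefficient sequences
  \<^typ>\<open>nat \<Rightarrow> 'k\<close>: a subspace S of a space spanned by a list ws is represented by its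
  coefficient preimage, the coefficient vectors below length ws whose combination lies in S.\<close>

lemma vector_space_cscale: "vector_space (cscale :: 'k::field \<Rightarrow> _)"
  by unfold_locales (auto simp: cscale_def plus_fun_def algebra_simps)

abbreviation "cspan \<equiv> module.span (cscale :: 'k::field \<Rightarrow> _)"
abbreviation "cdim \<equiv> vector_space.dim (cscale :: 'k::field \<Rightarrow> _)"
abbreviation "csubspace \<equiv> module.subspace (cscale :: 'k::field \<Rightarrow> _)"

lemma coeffs_dim_mono_finite_span:
  assumes "A \<subseteq> B" "finite W" "B \<subseteq> cspan W"
  shows "cdim A \<le> cdim B"
proof -
  interpret fv: vector_space cscale by (rule vector_space_cscale)
  obtain BA where BA: "BA \<subseteq> A" "fv.independent BA" "A \<subseteq> cspan BA" "card BA = cdim A"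
    using fv.basis_exists by blast
  obtain BB where BB: "BB \<subseteq> B" "fv.independent BB" "B \<subseteq> cspan BB" "card BB = cdim B"
    using fv.basis_exists by blast
  have finBB: "finite BB" using fv.independent_span_bound[OF assms(2) BB(2)] BB(1) assms(3) by auto
  have "BA \<subseteq> cspan BB" using BA(1) assms(1) BB(3) by auto
  then have "card BA \<le> card BB" using fv.independent_span_bound[OF finBB BA(2)] by auto
  then show ?thesis using BA(4) BB(4) by simp
qed

lemma coeffs_subspace_eq_if_dim_le:
  assumes "csubspace A" "A \<subseteq> B" "finite W" "B \<subseteq> cspan W" "cdim B \<le> cdim A"
  shows "A = B"
proof (rule ccontr)
  interpret fv: vector_space cscale by (rule vector_space_cscale)
  assume "A \<noteq> B"
  then obtain x where x: "x \<in> B" "x \<notin> A" using assms(2) by auto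
  obtain BA where BA: "BA \<subseteq> A" "fv.independent BA" "A \<subseteq> cspan BA" "card BA = cdim A"
    using fv.basis_exists by blast
  obtain BB where BB: "BB \<subseteq> B" "fv.independent BB" "B \<subseteq> cspan BB" "card BB = cdim B"
    using fv.basis_exists by blast
  have finBB: "finite BB" using fv.independent_span_bound[OF assms(3) BB(2)] BB(1) assms(4) by auto
  have finBA: "finite BA" using fv.independent_span_bound[OF assms(3) BA(2)] BA(1) assms(2,4) by auto
  have "cspan BA \<subseteq> A" using BA(1) assms(1) by (simp add: fv.span_minimal)
  then have xs: "x \<notin> cspan BA" using x by auto
  then have "fv.independent (insert x BA)" "x \<notin> BA" using BA(2) fv.span_base by (auto simp: fv.independent_insert)
  moreover have "insert x BA \<subseteq> cspan BB" using x BA(1) assms(2) BB(3) by auto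
  ultimately have "card (insert x BA) \<le> card BB" using fv.independent_span_bound[OF finBB] by auto
  then show False using BA(4) BB(4) assms(5) finBA \<open>x \<notin> BA\<close> by simp
qed


lemma sum_fun_apply: "(\<Sum>t\<in>A. f t) i = (\<Sum>t\<in>A. f t i)"
  by (induction A rule: infinite_finite_induct) (auto simp: plus_fun_def zero_fun_def)

definition coeffs_below :: "nat \<Rightarrow> (nat \<Rightarrow> 'k::field) set" where
  "coeffs_below D = {c. \<forall>i\<ge>D. c i = 0}"

lemma coeffs_below_span: "coeffs_below D \<subseteq> cspan (unit_coeff ` {..<D})"
proof
  interpret fv: vector_space cscale by (rule vector_space_cscale)
  fix c :: "nat \<Rightarrow> 'k::field" assume c: "c \<in> coeffs_below D"
  have "(\<Sum>t<D. cscale (c t) (unit_coeff t)) = c"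
  proof
    fix i
    show "(\<Sum>t<D. cscale (c t) (unit_coeff t)) i = c i"
      using c by (cases "i < D") (auto simp: sum_fun_apply cscale_def unit_coeff_def coeffs_below_def
          if_distrib[of "\<lambda>x. c _ * x"] cong: if_cong)
  qed
  moreover have "(\<Sum>t<D. cscale (c t) (unit_coeff t)) \<in> cspan (unit_coeff ` {..<D})"
    by (intro fv.span_sum fv.span_scale fv.span_base) auto
  ultimately show "c \<in> cspan (unit_coeff ` {..<D})" by simp
qed

lemma bounded_mono_nat_stabilizes:
  fixes a :: "nat \<Rightarrow> nat"
  assumes "\<And>n. a n \<le> a (Suc n)" "\<And>n. a n \<le> B"
  shows "\<exists>N. \<forall>n\<ge>N. a n = a N"
proof -
  have fin: "finite (range a)" using assms(2) by (meson finite_atMost finite_subset image_subsetI atMost_iff)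
  obtain N where "a N = Max (range a)" using Max_in[OF fin] by auto
  then show ?thesis using assms(1) by (metis Max_ge fin rangeI le_antisym lift_Suc_mono_le)
qed

lemma antimono_nat_stabilizes:
  fixes a :: "nat \<Rightarrow> nat"
  assumes "\<And>n. a (Suc n) \<le> a n"
  shows "\<exists>N. \<forall>n\<ge>N. a n = a N"
proof -
  have "a n \<le> a 0" for n using assms by (simp add: lift_Suc_antimono_le)
  then have fin: "finite (range a)" by (meson finite_atMost finite_subset image_subsetI atMost_iff)
  obtain N where "a N = Min (range a)" using Min_in[OF fin] by auto
  then show ?thesis using assms by (metis Min_le fin rangeI le_antisym lift_Suc_antimono_le)
qed

lemma vsum_upto_plus_eq_sum: "vsum_upto (+) 0 f n = (\<Sum>i<n. f i)"
  by (induction n) (simp_all add: add.commute)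

context kvec
begin

lemma spans_coeffs_below:
  assumes "spans ws" "x \<in> V"
  obtains c where "c \<in> coeffs_below (length ws)" "x = lin_comb ws c"
proof -
  obtain c where c: "x = lin_comb ws c" using assms unfolding spans_def by blast
  have "lin_comb ws (\<lambda>i. if i < length ws then c i else 0) = lin_comb ws c"
    unfolding lin_comb_def by (rule vsum_upto_cong) auto
  then show ?thesis using that[of "\<lambda>i. if i < length ws then c i else 0"] c
    by (simp add: coeffs_below_def)
qed

definition coeff_preimage :: "'v list \<Rightarrow> 'v set \<Rightarrow> (nat \<Rightarrow> 'k) set" where
  "coeff_preimage ws S = {c \<in> coeffs_below (length ws). lin_comb ws c \<in> S}"

lemma coeff_preimage_subspace:
  assumes "set ws \<subseteq> V" "ksubspace S"
  shows "csubspace (coeff_preimage ws S)"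
proof -
  interpret fv: vector_space cscale by (rule vector_space_cscale)
  show ?thesis
    using assms lin_comb_smult[OF assms(1)]
    unfolding fv.subspace_def coeff_preimage_def ksubspace_def coeffs_below_def
    by (auto simp: lin_comb_zero lin_comb_add cscale_def)
qed

lemma coeff_preimage_span: "coeff_preimage ws S \<subseteq> cspan (unit_coeff ` {..<length ws})"
  using coeffs_below_span unfolding coeff_preimage_def by blast

lemma coeff_preimage_mono: "S \<subseteq> T \<Longrightarrow> coeff_preimage ws S \<subseteq> coeff_preimage ws T"
  unfolding coeff_preimage_def by auto

lemma coeff_preimage_reflects_subset:
  assumes "spans ws" "S \<subseteq> V" "coeff_preimage ws S \<subseteq> coeff_preimage ws T"
  shows "S \<subseteq> T"
proof
  fix x assume x: "x \<in> S"
  then obtain c where "c \<in> coeffs_below (length ws)" "x = lin_comb ws c"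
    using spans_coeffs_below[OF assms(1)] assms(2) by blast
  then show "x \<in> T" using x assms(3) unfolding coeff_preimage_def by auto
qed

lemma coeff_preimage_dim_le: "cdim (coeff_preimage ws S) \<le> length ws"
proof -
  interpret fv: vector_space cscale by (rule vector_space_cscale)
  have "cdim (coeff_preimage ws S) \<le> card (unit_coeff ` {..<length ws} :: (nat \<Rightarrow> 'k) set)"
    by (rule fv.dim_le_card[OF coeff_preimage_span]) auto
  also have "\<dots> \<le> length ws" using card_image_le[of "{..<length ws}" unit_coeff] by simp
  finally show ?thesis .
qed

lemma ksubspace_eq_if_dim_le:
  assumes ws: "spans ws" and S: "ksubspace S" and T: "ksubspace T" and "S \<subseteq> T"
    and "cdim (coeff_preimage ws T) \<le> cdim (coeff_preimage ws S)"
  shows "S = T"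
proof -
  have wsV: "set ws \<subseteq> V" using ws unfolding spans_def by auto
  have "csubspace (coeff_preimage ws S)" by (rule coeff_preimage_subspace[OF wsV S])
  moreover have "coeff_preimage ws S \<subseteq> coeff_preimage ws T"
    by (rule coeff_preimage_mono) fact
  moreover have "finite (unit_coeff ` {..<length ws} :: (nat \<Rightarrow> 'k) set)" by simp
  moreover note coeff_preimage_span[of ws T]
  ultimately have "coeff_preimage ws S = coeff_preimage ws T"
    using assms(5) by (rule coeffs_subspace_eq_if_dim_le)
  moreover have "T \<subseteq> V" using T unfolding ksubspace_def by blast
  ultimately have "T \<subseteq> S" using coeff_preimage_reflects_subset[OF ws, of T S] by simp
  then show ?thesis using \<open>S \<subseteq> T\<close> by blast
qed

lemma ascending_chain_stabilizes:
  assumes ws: "spans ws" and S: "\<And>n. ksubspace (S n)" and mono: "\<And>n. S n \<subseteq> S (Suc n)"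
  shows "\<exists>N. \<forall>n\<ge>N. S n = S N"
proof -
  let ?d = "\<lambda>n. cdim (coeff_preimage ws (S n))"
  have "?d n \<le> ?d (Suc n)" for n
    by (rule coeffs_dim_mono_finite_span[OF coeff_preimage_mono[OF mono] _ coeff_preimage_span]) simp
  then obtain N where N: "\<And>n. n \<ge> N \<Longrightarrow> ?d n = ?d N"
    using bounded_mono_nat_stabilizes[of ?d, OF _ coeff_preimage_dim_le] by blast
  have "S N = S n" if "N \<le> n" for n
    by (rule ksubspace_eq_if_dim_le[OF ws S S lift_Suc_mono_le[of S, OF mono that]]) (use N[OF that] in simp)
  then show ?thesis by metis
qed

lemma descending_chain_stabilizes:
  assumes ws: "spans ws" and S: "\<And>n. ksubspace (S n)" and anti: "\<And>n. S (Suc n) \<subseteq> S n"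
  shows "\<exists>N. \<forall>n\<ge>N. S n = S N"
proof -
  let ?d = "\<lambda>n. cdim (coeff_preimage ws (S n))"
  have "?d (Suc n) \<le> ?d n" for n
    by (rule coeffs_dim_mono_finite_span[OF coeff_preimage_mono[OF anti] _ coeff_preimage_span]) simp
  then obtain N where N: "\<And>n. n \<ge> N \<Longrightarrow> ?d n = ?d N"
    using antimono_nat_stabilizes[of ?d] by blast
  have "S n = S N" if "N \<le> n" for n
    by (rule ksubspace_eq_if_dim_le[OF ws S S lift_Suc_antimono_le[of S, OF anti that]]) (use N[OF that] in simp)
  then show ?thesis by blast
qed

lemma ksubspace_spanned:
  assumes ws: "spans ws" and S: "ksubspace S"
  obtains ss where "set ss \<subseteq> S" "\<forall>x\<in>S. \<exists>c. x = lin_comb ss c"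
proof -
  interpret fv: vector_space cscale by (rule vector_space_cscale)
  have wsV: "set ws \<subseteq> V" using ws unfolding spans_def by auto
  obtain BS where BS: "BS \<subseteq> coeff_preimage ws S" "fv.independent BS"
      "coeff_preimage ws S \<subseteq> cspan BS"
    using fv.basis_exists by metis
  have "finite BS"
    using fv.independent_span_bound[OF _ BS(2)] BS(1) coeff_preimage_span by blast
  then obtain bl where bl: "set bl = BS" "distinct bl" using finite_distinct_list by metis
  define ss where "ss = map (lin_comb ws) bl"
  have ss_spans: "\<exists>c. x = lin_comb ss c" if x: "x \<in> S" for x
  proof -
    obtain c where "c \<in> coeffs_below (length ws)" "x = lin_comb ws c"
      using spans_coeffs_below[OF ws] x S unfolding ksubspace_def by blast
    then have "c \<in> cspan (set bl)" using x BS(3) bl(1) unfolding coeff_preimage_def by blast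
    then obtain u where "c = (\<Sum>v\<in>set bl. cscale (u v) v)" using fv.span_finite by auto
    also have "\<dots> = (\<Sum>i<length bl. cscale (u (bl ! i)) (bl ! i))"
      using bl(2) by (simp add: sum.distinct_set_conv_list sum_list_sum_nth atLeast0LessThan)
    finally have "x = lin_comb ws (\<Sum>i<length bl. cscale (u (bl ! i)) (bl ! i))"
      using \<open>x = lin_comb ws c\<close> by simp
    also have "\<dots> = vsum_upto add z (\<lambda>i. sc (u (bl ! i)) (lin_comb ws (bl ! i))) (length bl)"
      using wsV by (simp add: lin_comb_sum lin_comb_smult)
    also have "\<dots> = lin_comb ss (\<lambda>i. u (bl ! i))"
      unfolding lin_comb_def ss_def length_map by (rule vsum_upto_cong) simp
    finally show ?thesis by blast
  qed
  have "set ss \<subseteq> S" using BS(1) bl unfolding ss_def coeff_preimage_def by auto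
  then show ?thesis by (rule that) (use ss_spans in blast)
qed

lemma spans_embeds_coeffs:
  assumes "spans ws"
  shows "\<exists>j::'v \<Rightarrow> nat \<Rightarrow> 'k. inj_on j V"
proof -
  define j where "j x = (SOME c. x = lin_comb ws c)" for x
  have "x = lin_comb ws (j x)" if "x \<in> V" for x
  proof -
    have "\<exists>c. x = lin_comb ws c" using assms that unfolding spans_def by blast
    then show ?thesis unfolding j_def by (rule someI_ex)
  qed
  then have "inj_on j V" by (metis inj_onI)
  then show ?thesis by blast
qed

lemma spans_if_linear_embedding:
  assumes E_add: "\<And>x y. x \<in> V \<Longrightarrow> y \<in> V \<Longrightarrow> E (add x y) = E x + E y"
    and E_smult: "\<And>c x. x \<in> V \<Longrightarrow> E (sc c x) = cscale c (E x)"
    and inj: "inj_on E V" and img: "E ` V \<subseteq> coeffs_below D"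
  obtains ws where "spans ws"
proof -
  interpret fv: vector_space cscale by (rule vector_space_cscale)
  interpret coeffs: kvec UNIV "(+)" 0 "cscale :: 'k \<Rightarrow> _"
    by unfold_locales (auto simp: kvs_def cscale_def algebra_simps)
  have E_zero: "E z = 0" using E_smult[of z 0] by (simp add: cscale_def zero_fun_def)
  have "csubspace (E ` V)"
    unfolding fv.subspace_def using E_zero E_add E_smult
    by (auto simp flip: E_add E_smult intro!: image_eqI[of 0 E z])
  obtain BS where BS: "BS \<subseteq> E ` V" "fv.independent BS" "E ` V \<subseteq> cspan BS"
    using fv.basis_exists by metis
  have "finite BS"
    using fv.independent_span_bound[OF _ BS(2)] BS(1) img coeffs_below_span by blast
  then obtain bl where bl: "set bl = BS" "distinct bl" using finite_distinct_list by metis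
  define ws where "ws = map (the_inv_into V E) bl"
  have ws_V: "set ws \<subseteq> V"
    using BS(1) bl(1) the_inv_into_into[OF inj] unfolding ws_def by auto
  have E_ws: "map E ws = bl"
    using BS(1) bl(1) f_the_inv_into_f[OF inj] unfolding ws_def by (auto intro!: map_idI)
  have "x \<in> lin_span ws" if x: "x \<in> V" for x
  proof -
    obtain u where "E x = (\<Sum>v\<in>set bl. cscale (u v) v)"
      using x BS(3) bl(1) fv.span_finite[OF \<open>finite BS\<close>] by blast
    also have "\<dots> = (\<Sum>i<length bl. cscale (u (bl ! i)) (bl ! i))"
      using bl(2) by (simp add: sum.distinct_set_conv_list sum_list_sum_nth atLeast0LessThan)
    also have "\<dots> = vsum_upto (+) 0 (\<lambda>i. cscale (u (bl ! i)) (bl ! i)) (length bl)"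
      by (rule vsum_upto_plus_eq_sum[symmetric])
    also have "\<dots> = E (lin_comb ws (\<lambda>i. u (bl ! i)))"
      using lin_comb_map[where F = E and c = "\<lambda>i. u (bl ! i)", OF coeffs.kvec_axioms ws_V subset_UNIV E_add E_smult]
      unfolding coeffs.lin_comb_def E_ws by simp
    finally show ?thesis
      using inj x ws_V unfolding lin_span_def by (metis inj_onD lin_comb_closed rangeI)
  qed
  then show ?thesis using that ws_V unfolding spans_iff_lin_span by blast
qed

end

section \<open>Endomorphisms of modules\<close>

context rmodule
begin

context
  fixes N1 N2 assumes N1: "submod R M N1" and N2: "submod R M N2" and int: "N1 \<inter> N2 = {mzero M}"
    and sum: "msum_set M N1 N2 = mcar M"
begin

lemma direct_sum_decomp: "y \<in> mcar M \<Longrightarrow> \<exists>a\<in>N1. \<exists>b\<in>N2. y = madd M a b"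
  using sum unfolding msum_set_def by blast

lemma proj_along_eq: "a \<in> N1 \<Longrightarrow> b \<in> N2 \<Longrightarrow> proj_along N1 N2 (madd M a b) = a"
  using N1 N2 int by (intro proj_along_add) (auto simp: submod_def ksubspace_def)

lemma proj_along_hom: "hom R M M (proj_along N1 N2)"
  unfolding hom_def
proof (intro conjI ballI allI)
  have N1M: "N1 \<subseteq> mcar M" and N2M: "N2 \<subseteq> mcar M" using N1 N2 unfolding submod_def by auto
  show "proj_along N1 N2 ` mcar M \<subseteq> mcar M"
    using direct_sum_decomp proj_along_eq N1M by fastforce
next
  fix x y assume "x \<in> mcar M" "y \<in> mcar M"
  then obtain a b a' b' where "a \<in> N1" "b \<in> N2" "a' \<in> N1" "b' \<in> N2" "x = madd M a b" "y = madd M a' b'"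
    using direct_sum_decomp by meson
  moreover have "a \<in> mcar M" "b \<in> mcar M" "a' \<in> mcar M" "b' \<in> mcar M"
    using calculation N1 N2 unfolding submod_def by auto
  ultimately show "proj_along N1 N2 (madd M x y) = madd M (proj_along N1 N2 x) (proj_along N1 N2 y)"
    using proj_along_eq N1 N2 unfolding submod_def by (simp add: a_swap_middle)
next
  fix c x assume "x \<in> mcar M"
  then obtain a b where "a \<in> N1" "b \<in> N2" "x = madd M a b" using direct_sum_decomp by meson
  moreover have "a \<in> mcar M" "b \<in> mcar M" using calculation N1 N2 unfolding submod_def by auto
  ultimately show "proj_along N1 N2 (msmult M c x) = msmult M c (proj_along N1 N2 x)"
    using proj_along_eq N1 N2 unfolding submod_def by (simp add: smult_r_distr)
next
  fix x r assume "x \<in> mcar M" "r \<in> acar R"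
  then obtain a b where "a \<in> N1" "b \<in> N2" "x = madd M a b" using direct_sum_decomp by meson
  moreover have "a \<in> mcar M" "b \<in> mcar M" using calculation N1 N2 unfolding submod_def by auto
  ultimately show "proj_along N1 N2 (mact M x r) = mact M (proj_along N1 N2 x) r"
    using proj_along_eq N1 N2 \<open>r \<in> acar R\<close> unfolding submod_def by (simp add: act_l_distr)
qed

lemma direct_sum_projection:
  obtains p where "hom R M M p" "\<forall>y\<in>mcar M. p y \<in> N1 \<and> vdiff y (p y) \<in> N2"
    "\<forall>a\<in>N1. p a = a" "\<forall>b\<in>N2. p b = mzero M"
proof
  have N1M: "N1 \<subseteq> mcar M" and N2M: "N2 \<subseteq> mcar M" and "mzero M \<in> N1" "mzero M \<in> N2"
    using N1 N2 unfolding submod_def by auto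
  show "hom R M M (proj_along N1 N2)" by (rule proj_along_hom)
  have S: "ksubspace N1" and T: "ksubspace N2"
    using N1 N2 unfolding submod_def ksubspace_def by blast+
  show "\<forall>y\<in>mcar M. proj_along N1 N2 y \<in> N1 \<and> vdiff y (proj_along N1 N2 y) \<in> N2"
  proof
    fix y assume "y \<in> mcar M"
    then obtain a b where "a \<in> N1" "b \<in> N2" "y = madd M a b" using direct_sum_decomp by meson
    then show "proj_along N1 N2 y \<in> N1 \<and> vdiff y (proj_along N1 N2 y) \<in> N2"
      using proj_along_decomp[OF S T int] by simp
  qed
  show "\<forall>a\<in>N1. proj_along N1 N2 a = a"
    using proj_along_eq[of _ "mzero M"] N1M \<open>mzero M \<in> N2\<close> by (simp add: subsetD)
  show "\<forall>b\<in>N2. proj_along N1 N2 b = mzero M"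
    using proj_along_eq[of "mzero M"] N2M \<open>mzero M \<in> N1\<close> by (simp add: subsetD)
qed

end

lemma ker_image_direct_sum:
  assumes \<phi>: "hom R M M \<phi>"
    and ker: "\<And>x. x \<in> mcar M \<Longrightarrow> \<phi> (\<phi> x) = mzero M \<Longrightarrow> \<phi> x = mzero M"
    and img: "\<phi> ` mcar M \<subseteq> (\<lambda>x. \<phi> (\<phi> x)) ` mcar M"
  shows "{x \<in> mcar M. \<phi> x = mzero M} \<inter> \<phi> ` mcar M = {mzero M}"
    and "msum_set M {x \<in> mcar M. \<phi> x = mzero M} (\<phi> ` mcar M) = mcar M"
proof -
  interpret MM: rmodule_pair R M M by unfold_locales
  show "{x \<in> mcar M. \<phi> x = mzero M} \<inter> \<phi> ` mcar M = {mzero M}"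
    using ker MM.hom_zero[OF \<phi>] by (auto intro!: image_eqI[of _ \<phi> "mzero M"])
  show "msum_set M {x \<in> mcar M. \<phi> x = mzero M} (\<phi> ` mcar M) = mcar M"
  proof
    show "msum_set M {x \<in> mcar M. \<phi> x = mzero M} (\<phi> ` mcar M) \<subseteq> mcar M"
      unfolding msum_set_def using MM.hom_closed[OF \<phi>] by auto
  next
    show "mcar M \<subseteq> msum_set M {x \<in> mcar M. \<phi> x = mzero M} (\<phi> ` mcar M)"
    proof
      fix x assume x: "x \<in> mcar M"
      then obtain y where y: "y \<in> mcar M" "\<phi> x = \<phi> (\<phi> y)" using img by blast
      have \<phi>y: "\<phi> y \<in> mcar M" using MM.hom_closed[OF \<phi> y(1)] .
      have "\<phi> (vdiff x (\<phi> y)) = mzero M"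
        using MM.hom_vdiff[OF \<phi> x \<phi>y] y(2) MM.hom_closed[OF \<phi> \<phi>y] by simp
      moreover have "x = madd M (vdiff x (\<phi> y)) (\<phi> y)" using vdiff_add_cancel[OF x \<phi>y] by simp
      ultimately show "x \<in> msum_set M {x \<in> mcar M. \<phi> x = mzero M} (\<phi> ` mcar M)"
        unfolding msum_set_def using vdiff_closed[OF x \<phi>y] y(1) by blast
    qed
  qed
qed

lemma powers_stabilize:
  assumes ws: "spans ws" and \<psi>: "hom R M M \<psi>"
  obtains n where "0 < n"
    "\<And>x. x \<in> mcar M \<Longrightarrow> (\<psi> ^^ n) ((\<psi> ^^ n) x) = mzero M \<Longrightarrow> (\<psi> ^^ n) x = mzero M"
    "(\<psi> ^^ n) ` mcar M \<subseteq> (\<lambda>x. (\<psi> ^^ n) ((\<psi> ^^ n) x)) ` mcar M"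
proof -
  interpret MM: rmodule_pair R M M by unfold_locales
  define K where "K n = {x \<in> mcar M. (\<psi> ^^ n) x = mzero M}" for n
  define I where "I n = (\<psi> ^^ n) ` mcar M" for n
  have \<psi>n: "hom R M M (\<psi> ^^ n)" for n by (rule hom_funpow[OF \<psi>])
  have "submod R M (K n)" "submod R M (I n)" for n
    unfolding K_def I_def by (rule MM.ker_submod[OF \<psi>n], rule MM.image_submod[OF \<psi>n])
  then have ksub: "ksubspace (K n)" "ksubspace (I n)" for n
    unfolding submod_def ksubspace_def by blast+
  have "K n \<subseteq> K (Suc n)" for n
  proof
    fix x assume "x \<in> K n"
    then show "x \<in> K (Suc n)" unfolding K_def using MM.hom_zero[OF \<psi>] by simp
  qed
  then have "\<exists>N. \<forall>n\<ge>N. K n = K N" by (rule ascending_chain_stabilizes[OF ws ksub(1)])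
  then obtain N1 where N1: "\<forall>n\<ge>N1. K n = K N1" ..
  have "I (Suc n) \<subseteq> I n" for n
  proof
    fix x assume "x \<in> I (Suc n)"
    then obtain y where y: "y \<in> mcar M" "x = (\<psi> ^^ n) (\<psi> y)"
      unfolding I_def by (auto simp: funpow_Suc_right simp del: funpow.simps)
    then show "x \<in> I n" unfolding I_def using MM.hom_closed[OF \<psi>] by blast
  qed
  then have "\<exists>N. \<forall>n\<ge>N. I n = I N" by (rule descending_chain_stabilizes[OF ws ksub(2)])
  then obtain N2 where N2: "\<forall>n\<ge>N2. I n = I N2" ..
  define n where "n = Suc (max N1 N2)"
  have KK: "K (n + n) = K n" and II: "I (n + n) = I n"
    using N1 N2 unfolding n_def by (metis le_add1 le_SucI max.cobounded1 max.cobounded2 le_trans)+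
  have pow_add: "(\<psi> ^^ (n + n)) x = (\<psi> ^^ n) ((\<psi> ^^ n) x)" for x by (simp add: funpow_add)
  show ?thesis
  proof (rule that)
    show "0 < n" unfolding n_def by simp
    show "(\<psi> ^^ n) x = mzero M" if "x \<in> mcar M" "(\<psi> ^^ n) ((\<psi> ^^ n) x) = mzero M" for x
      using that KK unfolding K_def pow_add[symmetric] by blast
    show "(\<psi> ^^ n) ` mcar M \<subseteq> (\<lambda>x. (\<psi> ^^ n) ((\<psi> ^^ n) x)) ` mcar M"
      using II unfolding I_def pow_add[symmetric] by blast
  qed
qed

lemma fitting_lemma:
  assumes ws: "spans ws" and ind: "indecomposable R M" and \<psi>: "hom R M M \<psi>"
  obtains (nilpotent) n where "\<forall>x\<in>mcar M. (\<psi> ^^ n) x = mzero M"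
  | (bijective) n where "n > 0" "bij_betw (\<psi> ^^ n) (mcar M) (mcar M)"
proof -
  interpret MM: rmodule_pair R M M by unfold_locales
  obtain n where n: "0 < n"
    "\<And>x. x \<in> mcar M \<Longrightarrow> (\<psi> ^^ n) ((\<psi> ^^ n) x) = mzero M \<Longrightarrow> (\<psi> ^^ n) x = mzero M"
    "(\<psi> ^^ n) ` mcar M \<subseteq> (\<lambda>x. (\<psi> ^^ n) ((\<psi> ^^ n) x)) ` mcar M"
    by (rule powers_stabilize[OF ws \<psi>]) (rule that)
  have \<psi>n: "hom R M M (\<psi> ^^ n)" by (rule hom_funpow[OF \<psi>])
  let ?K = "{x \<in> mcar M. (\<psi> ^^ n) x = mzero M}" and ?I = "(\<psi> ^^ n) ` mcar M"
  note decomp = ker_image_direct_sum[OF \<psi>n n(2,3)]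
  have "?K = {mzero M} \<or> ?I = {mzero M}"
    using ind MM.ker_submod[OF \<psi>n] MM.image_submod[OF \<psi>n] decomp unfolding indecomposable_def by blast
  then show ?thesis
  proof
    assume K0: "?K = {mzero M}"
    then have "inj_on (\<psi> ^^ n) (mcar M)" using MM.hom_inj_iff[OF \<psi>n] by blast
    moreover have "?I = mcar M"
      using decomp(2) K0 MM.hom_closed[OF \<psi>n] unfolding msum_set_def by force
    ultimately show ?thesis using bijective[OF n(1)] unfolding bij_betw_def by simp
  next
    assume "?I = {mzero M}"
    then show ?thesis using nilpotent[of n] by auto
  qed
qed

lemma not_subset_direct_summand:
  assumes "submod R M T" "S \<inter> T = {mzero M}" "T \<noteq> {mzero M}"
  shows "\<not> mcar M \<subseteq> S"
  using assms unfolding submod_def by blast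

lemma nilpotent_complement_submod:
  assumes \<phi>: "hom R M M \<phi>" and nil: "\<forall>y\<in>mcar M. (\<phi> ^^ n) y = mzero M"
    and U: "submod R M U" and compl: "\<And>y. y \<in> mcar M \<Longrightarrow> vdiff y (\<phi> y) \<in> U"
  shows "U = mcar M"
proof -
  have "(\<phi> ^^ (n - j)) y \<in> U" if "y \<in> mcar M" for j y
  proof (induction j)
    case 0 then show ?case using nil U that unfolding submod_def by simp
  next
    case (Suc j)
    show ?case
    proof (cases "j < n")
      case True
      let ?z = "(\<phi> ^^ (n - Suc j)) y"
      have z: "?z \<in> mcar M" using hom_funpow_closed[OF \<phi> that] .
      have "\<phi> ?z = (\<phi> ^^ (n - j)) y" using True by (metis Suc_diff_Suc comp_apply funpow.simps(2))
      then have "madd M (vdiff ?z (\<phi> ?z)) (\<phi> ?z) = ?z" and "\<phi> ?z \<in> U"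
        using vdiff_add_cancel z Suc hom_funpow_closed[OF \<phi>] \<phi> unfolding hom_def by auto
      then show ?thesis using compl[OF z] U unfolding submod_def by metis
    next
      case False
      then show ?thesis using Suc by simp
    qed
  qed
  from this[of _ n] show ?thesis using U unfolding submod_def by auto
qed

lemma nilpotent_sum_id_trivial:
  assumes \<phi>: "hom R M M \<phi>" and \<chi>: "hom R M M \<chi>"
    and sum_id: "\<And>x. x \<in> mcar M \<Longrightarrow> madd M (\<phi> x) (\<chi> x) = x"
    and nil\<phi>: "\<forall>x\<in>mcar M. (\<phi> ^^ m) x = mzero M" and nil\<chi>: "\<forall>x\<in>mcar M. (\<chi> ^^ n) x = mzero M"
  shows "mcar M = {mzero M}"
proof -
  interpret MM: rmodule_pair R M M by unfold_locales
  have "inj_on \<chi> (mcar M)"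
    unfolding MM.hom_inj_iff[OF \<chi>]
  proof (intro ballI impI)
    fix x assume x: "x \<in> mcar M" and "\<chi> x = mzero M"
    then have "\<phi> x = x" using sum_id[OF x] MM.hom_closed[OF \<phi> x] by simp
    then have "(\<phi> ^^ m) x = x" by (induction m) simp_all
    then show "x = mzero M" using nil\<phi> x by simp
  qed
  then have "inj_on (\<chi> ^^ n) (mcar M)" by (rule hom_funpow_inj_on[OF \<chi>])
  then show ?thesis
    using nil\<chi> MM.hom_inj_iff[OF hom_funpow[OF \<chi>]] zero_closed by blast
qed

end

lemma (in rmodule_pair) restrict_endo:
  assumes f: "hom R M N f" and inj: "inj_on f (mcar M)" and h: "hom R N N h"
    and inv: "\<And>x. x \<in> mcar M \<Longrightarrow> h (f x) \<in> f ` mcar M"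
  defines "\<psi> \<equiv> \<lambda>x. the_inv_into (mcar M) f (h (f x))"
  shows "hom R M M \<psi>" and "\<And>x. x \<in> mcar M \<Longrightarrow> \<psi> x \<in> mcar M \<and> f (\<psi> x) = h (f x)"
    and "\<And>x k. x \<in> mcar M \<Longrightarrow> f ((\<psi> ^^ k) x) = (h ^^ k) (f x)"
proof -
  interpret NN: rmodule_pair R N N by unfold_locales
  show \<psi>: "\<And>x. x \<in> mcar M \<Longrightarrow> \<psi> x \<in> mcar M \<and> f (\<psi> x) = h (f x)"
    unfolding \<psi>_def using inv the_inv_into_f_f[OF inj] by (metis imageE)
  have f_eqD: "x \<in> mcar M \<Longrightarrow> y \<in> mcar M \<Longrightarrow> f x = f y \<Longrightarrow> x = y" for x y
    using inj by (meson inj_onD)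
  show hom\<psi>: "hom R M M \<psi>"
    unfolding hom_def
  proof (intro conjI ballI allI)
    show "\<psi> ` mcar M \<subseteq> mcar M" using \<psi> by auto
  next
    fix x y assume "x \<in> mcar M" "y \<in> mcar M"
    then show "\<psi> (madd M x y) = madd M (\<psi> x) (\<psi> y)"
      using \<psi> by (intro f_eqD) (simp_all add: hom_add[OF f] NN.hom_add[OF h] hom_closed[OF f])
  next
    fix c x assume "x \<in> mcar M"
    then show "\<psi> (msmult M c x) = msmult M c (\<psi> x)"
      using \<psi> by (intro f_eqD) (simp_all add: hom_smult[OF f] NN.hom_smult[OF h] hom_closed[OF f])
  next
    fix x r assume "x \<in> mcar M" "r \<in> acar R"
    then show "\<psi> (mact M x r) = mact M (\<psi> x) r"
      using \<psi> by (intro f_eqD) (simp_all add: hom_act[OF f] NN.hom_act[OF h] hom_closed[OF f])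
  qed
  show "f ((\<psi> ^^ k) x) = (h ^^ k) (f x)" if "x \<in> mcar M" for x k
    by (induction k) (simp_all add: \<psi> hom_funpow_closed[OF hom\<psi> that])
qed

lemma (in rmodule) vsum_act_zip:
  assumes "set gs \<subseteq> mcar M" "length rs = length gs" "set rs \<subseteq> acar R"
  shows "vsum (madd M) (mzero M) (map (\<lambda>(g, r). mact M g r) (zip gs rs)) =
    vsum_upto (madd M) (mzero M) (\<lambda>i. mact M (gs ! i) (rs ! i)) (length gs)"
proof -
  have "mact M (gs ! i) (rs ! i) \<in> mcar M" if "i < length gs" for i
    using assms that by (metis act_closed nth_mem subsetD)
  then have "set (map (\<lambda>(g, r). mact M g r) (zip gs rs)) \<subseteq> mcar M"
    using assms(2) by (auto simp: set_zip)
  then show ?thesis using assms(2) by (simp add: vsum_eq_vsum_upto) (rule vsum_upto_cong, simp)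
qed

definition generated_by :: "('k::field, 'r, 'b) kalg_scheme \<Rightarrow> ('k, 'r, 'm) rmod \<Rightarrow> 'm list \<Rightarrow> ('r \<Rightarrow> bool) \<Rightarrow> bool" where
  "generated_by R M gs P \<longleftrightarrow> set gs \<subseteq> mcar M \<and> (\<forall>m\<in>mcar M. \<exists>r. (\<forall>i<length gs. r i \<in> acar R \<and> P (r i)) \<and>
     m = vsum_upto (madd M) (mzero M) (\<lambda>i. mact M (gs ! i) (r i)) (length gs))"

lemma generated_byD:
  assumes "generated_by R M gs P"
  shows "set gs \<subseteq> mcar M" and "i < length gs \<Longrightarrow> gs ! i \<in> mcar M"
    and "m \<in> mcar M \<Longrightarrow> \<exists>r. (\<forall>i<length gs. r i \<in> acar R \<and> P (r i)) \<and>
      m = vsum_upto (madd M) (mzero M) (\<lambda>i. mact M (gs ! i) (r i)) (length gs)"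
  using assms unfolding generated_by_def by (auto simp: subset_iff)

lemma fg_rmod_generators:
  assumes "fg_rmod R M"
  obtains gs where "generated_by R M gs (\<lambda>_. True)"
proof -
  interpret rmodule R M by (rule fg_rmod_rmodule[OF assms])
  obtain gs where gs: "set gs \<subseteq> mcar M" "\<forall>m\<in>mcar M. \<exists>rs. length rs = length gs \<and> set rs \<subseteq> acar R \<and>
      m = vsum (madd M) (mzero M) (map (\<lambda>(g, r). mact M g r) (zip gs rs))"
    using assms unfolding fg_rmod_def by blast
  have "\<exists>r. (\<forall>i<length gs. r i \<in> acar R) \<and>
      m = vsum_upto (madd M) (mzero M) (\<lambda>i. mact M (gs ! i) (r i)) (length gs)" if m: "m \<in> mcar M" for m
  proof -
    obtain rs where rs: "length rs = length gs" "set rs \<subseteq> acar R"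
      "m = vsum (madd M) (mzero M) (map (\<lambda>(g, r). mact M g r) (zip gs rs))"
      using gs(2) m by blast
    then show ?thesis
      using vsum_act_zip[OF gs(1) rs(1,2)] nth_mem by (intro exI[of _ "\<lambda>i. rs ! i"]) auto
  qed
  then have "generated_by R M gs (\<lambda>_. True)" unfolding generated_by_def using gs(1) by simp
  then show ?thesis by (rule that)
qed

lemma fg_rmodI:
  assumes M: "is_rmod R M" and gen: "generated_by R M gs P"
  shows "fg_rmod R M"
proof -
  interpret rmodule R M by (rule rmodule.intro[OF M])
  have "\<exists>rs. length rs = length gs \<and> set rs \<subseteq> acar R \<and>
      m = vsum (madd M) (mzero M) (map (\<lambda>(g, r). mact M g r) (zip gs rs))" if m: "m \<in> mcar M" for m
  proof -
    obtain r where r: "\<forall>i<length gs. r i \<in> acar R"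
      "m = vsum_upto (madd M) (mzero M) (\<lambda>i. mact M (gs ! i) (r i)) (length gs)"
      using generated_byD(3)[OF gen m] by auto
    define rs where "rs = map r [0..<length gs]"
    have rs: "length rs = length gs" "set rs \<subseteq> acar R" using r(1) unfolding rs_def by auto
    have "m = vsum_upto (madd M) (mzero M) (\<lambda>i. mact M (gs ! i) (rs ! i)) (length gs)"
      unfolding r(2) rs_def by (rule vsum_upto_cong) simp
    then show ?thesis using vsum_act_zip[OF generated_byD(1)[OF gen] rs] rs by metis
  qed
  then show ?thesis using M generated_byD(1)[OF gen] unfolding fg_rmod_def by blast
qed

lemma fg_rmod_image:
  assumes M: "fg_rmod R M" and N: "is_rmod R N" and f: "hom R M N f" and surj: "f ` mcar M = mcar N"
  shows "fg_rmod R N"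
proof -
  interpret MN: rmodule_pair R M N by unfold_locales (use M N in \<open>auto simp: fg_rmod_def\<close>)
  obtain gs where gs: "generated_by R M gs (\<lambda>_. True)" by (rule fg_rmod_generators[OF M])
  have "\<exists>r. (\<forall>i<length (map f gs). r i \<in> acar R) \<and>
      n = vsum_upto (madd N) (mzero N) (\<lambda>i. mact N (map f gs ! i) (r i)) (length (map f gs))"
    if n: "n \<in> mcar N" for n
  proof -
    obtain m where m: "m \<in> mcar M" "n = f m" using n surj by blast
    then obtain r where r: "\<forall>i<length gs. r i \<in> acar R"
      "m = vsum_upto (madd M) (mzero M) (\<lambda>i. mact M (gs ! i) (r i)) (length gs)"
      using generated_byD(3)[OF gs m(1)] by auto
    note gsi = generated_byD(2)[OF gs]
    have "n = vsum_upto (madd N) (mzero N) (\<lambda>i. f (mact M (gs ! i) (r i))) (length gs)"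
      using m r gsi by (simp add: MN.hom_vsum_upto[OF f])
    also have "\<dots> = vsum_upto (madd N) (mzero N) (\<lambda>i. mact N (map f gs ! i) (r i)) (length (map f gs))"
      unfolding length_map by (rule MN.N.vsum_upto_cong) (simp add: r(1) gsi MN.hom_act[OF f])
    finally show ?thesis using r(1) by auto
  qed
  moreover have "set (map f gs) \<subseteq> mcar N" using generated_byD(1)[OF gs] MN.hom_closed[OF f] by auto
  ultimately have "generated_by R N (map f gs) (\<lambda>_. True)" unfolding generated_by_def by simp
  then show ?thesis by (rule fg_rmodI[OF N])
qed

definition transport :: "('k, 'r, 'm) rmod \<Rightarrow> ('m \<Rightarrow> 'x) \<Rightarrow> ('k, 'r, 'x) rmod" where
  "transport M j = \<lparr>mcar = j ` mcar M,
     madd = \<lambda>x y. j (madd M (the_inv_into (mcar M) j x) (the_inv_into (mcar M) j y)),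
     mzero = j (mzero M),
     msmult = \<lambda>c x. j (msmult M c (the_inv_into (mcar M) j x)),
     mact = \<lambda>x r. j (mact M (the_inv_into (mcar M) j x) r)\<rparr>"

lemma transport_rmod:
  assumes M: "is_rmod R M" and j: "inj_on j (mcar M)"
  shows "is_rmod R (transport M j)"
proof -
  interpret rmodule R M by (rule rmodule.intro[OF M])
  show ?thesis
    unfolding is_rmod_def kvs_def transport_def using the_inv_into_f_f[OF j]
    by (auto simp: a_assoc r_neg smult_assoc smult_r_distr smult_l_distr act_r_distr act_assoc act_l_distr act_smult_left act_smult_right) (simp_all add: a_comm)
qed

lemma transport_hom:
  assumes j: "inj_on j (mcar M)" and M: "is_rmod R M"
  shows "hom R M (transport M j) j" and "hom R (transport M j) M (the_inv_into (mcar M) j)"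
proof -
  interpret rmodule R M by (rule rmodule.intro[OF M])
  show "hom R M (transport M j) j" "hom R (transport M j) M (the_inv_into (mcar M) j)"
    unfolding hom_def transport_def using the_inv_into_f_f[OF j] by auto
qed

lemma transport_fg:
  assumes M: "fg_rmod R M" and j: "inj_on j (mcar M)"
  shows "fg_rmod R (transport M j)"
proof -
  have MM: "is_rmod R M" using M unfolding fg_rmod_def by auto
  show ?thesis
    by (rule fg_rmod_image[OF M transport_rmod[OF MM j] transport_hom(1)[OF j MM]]) (simp add: transport_def)
qed

text \<open>The test modules in \<^const>\<open>projective_in\<close> and \<^const>\<open>injective_in\<close> have carriers in
  \<^typ>\<open>nat \<Rightarrow> 'k\<close>; any module whose carrier embeds there is transported to such a module.\<close>

lemma projective_lift_embeddable:
  fixes X :: "('k::field, 'r, 'x) rmod" and Y :: "('k, 'r, 'y) rmod"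
    and jX :: "'x \<Rightarrow> nat \<Rightarrow> 'k" and jY :: "'y \<Rightarrow> nat \<Rightarrow> 'k"
  assumes P: "projective_in R P" and X: "fg_rmod R X" and Y: "fg_rmod R Y"
    and jX: "inj_on jX (mcar X)" and jY: "inj_on jY (mcar Y)"
    and p: "hom R X Y p" "p ` mcar X = mcar Y" and h: "hom R P Y h"
  shows "\<exists>h'. hom R P X h' \<and> (\<forall>m\<in>mcar P. p (h' m) = h m)"
proof -
  have MX: "is_rmod R X" and MY: "is_rmod R Y" using X Y unfolding fg_rmod_def by auto
  let ?X = "transport X jX" and ?Y = "transport Y jY" and ?iX = "the_inv_into (mcar X) jX"
  let ?p = "\<lambda>x. jY (p (?iX x))" and ?h = "\<lambda>m. jY (h m)"
  have hp: "hom R ?X ?Y ?p"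
    by (rule hom_comp[OF transport_hom(2)[OF jX MX] hom_comp[OF p(1) transport_hom(1)[OF jY MY]]])
  have sp: "?p ` mcar ?X = mcar ?Y"
  proof -
    have "?p ` mcar ?X = (\<lambda>x. jY (p x)) ` mcar X"
      unfolding transport_def using the_inv_into_f_f[OF jX] by (auto simp: image_iff)
    also have "\<dots> = jY ` (p ` mcar X)" by (simp add: image_image)
    also have "\<dots> = mcar ?Y" using p(2) unfolding transport_def by simp
    finally show ?thesis .
  qed
  have hh: "hom R P ?Y ?h" by (rule hom_comp[OF h transport_hom(1)[OF jY MY]])
  obtain h'' where h'': "hom R P ?X h''" "\<forall>m\<in>mcar P. ?p (h'' m) = ?h m"
    using P transport_fg[OF X jX] transport_fg[OF Y jY] hp sp hh unfolding projective_in_def by blast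
  have hom': "hom R P X (\<lambda>m. ?iX (h'' m))" by (rule hom_comp[OF h''(1) transport_hom(2)[OF jX MX]])
  have "p (?iX (h'' m)) = h m" if m: "m \<in> mcar P" for m
  proof -
    have "?iX (h'' m) \<in> mcar X" using hom' m unfolding hom_def by auto
    then have "p (?iX (h'' m)) \<in> mcar Y" using p(1) unfolding hom_def by auto
    moreover have "h m \<in> mcar Y" using h m unfolding hom_def by auto
    ultimately show ?thesis using h''(2) m jY by (meson inj_onD)
  qed
  then show ?thesis using hom' by blast
qed

lemma injective_extend_embeddable:
  fixes X :: "('k::field, 'r, 'x) rmod" and Y :: "('k, 'r, 'y) rmod"
    and jX :: "'x \<Rightarrow> nat \<Rightarrow> 'k" and jY :: "'y \<Rightarrow> nat \<Rightarrow> 'k"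
  assumes E: "injective_in R E" and X: "fg_rmod R X" and Y: "fg_rmod R Y"
    and jX: "inj_on jX (mcar X)" and jY: "inj_on jY (mcar Y)"
    and u: "hom R X Y u" "inj_on u (mcar X)" and h: "hom R X E h"
  shows "\<exists>h'. hom R Y E h' \<and> (\<forall>x\<in>mcar X. h' (u x) = h x)"
proof -
  have MX: "is_rmod R X" and MY: "is_rmod R Y" using X Y unfolding fg_rmod_def by auto
  let ?X = "transport X jX" and ?Y = "transport Y jY" and ?iX = "the_inv_into (mcar X) jX"
  let ?u = "\<lambda>x. jY (u (?iX x))" and ?h = "\<lambda>x. h (?iX x)"
  have hu: "hom R ?X ?Y ?u"
    by (rule hom_comp[OF transport_hom(2)[OF jX MX] hom_comp[OF u(1) transport_hom(1)[OF jY MY]]])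
  have iu: "inj_on ?u (mcar ?X)"
  proof (rule inj_onI)
    fix a b assume a: "a \<in> mcar ?X" and b: "b \<in> mcar ?X" and e: "?u a = ?u b"
    obtain a' b' where ab: "a' \<in> mcar X" "b' \<in> mcar X" "a = jX a'" "b = jX b'"
      using a b unfolding transport_def by auto
    have "jY (u a') = jY (u b')" using e ab the_inv_into_f_f[OF jX] by simp
    then have "u a' = u b'" using jY u(1) ab unfolding hom_def by (meson image_subset_iff inj_onD)
    then have "a' = b'" using u(2) ab by (meson inj_onD)
    then show "a = b" using ab by simp
  qed
  have hh: "hom R ?X E ?h" by (rule hom_comp[OF transport_hom(2)[OF jX MX] h])
  obtain h'' where h'': "hom R ?Y E h''" "\<forall>x\<in>mcar ?X. h'' (?u x) = ?h x"
    using E transport_fg[OF X jX] transport_fg[OF Y jY] hu iu hh unfolding injective_in_def by blast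
  have hom': "hom R Y E (\<lambda>y. h'' (jY y))" by (rule hom_comp[OF transport_hom(1)[OF jY MY] h''(1)])
  have "h'' (jY (u x)) = h x" if x: "x \<in> mcar X" for x
  proof -
    have "jX x \<in> mcar ?X" using x unfolding transport_def by auto
    then have "h'' (?u (jX x)) = ?h (jX x)" using h''(2) by blast
    then show ?thesis using the_inv_into_f_f[OF jX x] by simp
  qed
  then show ?thesis using hom' by blast
qed

section \<open>The right repetitive algebra\<close>

definition diag_elem :: "('k, 'a, 'b) kalg_scheme \<Rightarrow> nat \<Rightarrow> 'a \<Rightarrow> ('k::zero, 'a) rep" where
  "diag_elem A i a = (\<lambda>k. if k = i then a else azero A, \<lambda>k x. 0)"
definition subdiag_elem :: "('k, 'a, 'b) kalg_scheme \<Rightarrow> nat \<Rightarrow> ('a \<Rightarrow> 'k) \<Rightarrow> ('k::zero, 'a) rep" where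
  "subdiag_elem A i \<phi> = (\<lambda>k. azero A, \<lambda>k. if k = i then \<phi> else (\<lambda>x. 0))"
definition unit_upto :: "('k, 'a, 'b) ualg_scheme \<Rightarrow> nat \<Rightarrow> ('k::zero, 'a) rep" where
  "unit_upto A n = (\<lambda>k. if k \<le> n then aone A else azero A, \<lambda>k x. 0)"
definition truncate_rows :: "('k, 'a, 'b) kalg_scheme \<Rightarrow> nat \<Rightarrow> ('k::zero, 'a) rep \<Rightarrow> ('k, 'a) rep" where
  "truncate_rows A n r = (\<lambda>k. if k \<le> n then fst r k else azero A, \<lambda>k. if k \<le> n then snd r k else (\<lambda>x. 0))"
definition supported_upto :: "('k, 'a, 'b) kalg_scheme \<Rightarrow> nat \<Rightarrow> ('k::zero, 'a) rep \<Rightarrow> bool" where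
  "supported_upto A n r \<longleftrightarrow> (\<forall>k>n. fst r k = azero A \<and> snd r k = (\<lambda>x. 0))"

text \<open>In matrix terms: \<^term>\<open>diag_elem A i a\<close> has the single entry a at (i,i),
  \<^term>\<open>subdiag_elem A i \<phi>\<close> the single entry \<phi> at (i,i-1), \<^term>\<open>unit_upto A n\<close> is the
  idempotent with 1 at (0,0),...,(n,n), and \<^term>\<open>truncate_rows A n r\<close> keeps rows 0..n of r.\<close>

lemma rep_alg_carrier_iff: "r \<in> acar (rep_alg A) \<longleftrightarrow> (\<forall>i. fst r i \<in> acar A) \<and> finite {i. fst r i \<noteq> azero A} \<and>
   (\<forall>i. snd r i \<in> dual A) \<and> snd r 0 = (\<lambda>x. 0) \<and> finite {i. snd r i \<noteq> (\<lambda>x. 0)}"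
  by (cases r) (simp add: rep_alg_def)

lemma rep_alg_add: "aadd (rep_alg A) r s = (\<lambda>i. aadd A (fst r i) (fst s i), \<lambda>i x. snd r i x + snd s i x)"
  by (simp add: rep_alg_def case_prod_beta)
lemma rep_alg_smult: "asmult (rep_alg A) c r = (\<lambda>i. asmult A c (fst r i), \<lambda>i x. c * snd r i x)"
  by (simp add: rep_alg_def case_prod_beta)
lemma rep_alg_mult: "amul (rep_alg A) r s = (\<lambda>i. amul A (fst r i) (fst s i),
   \<lambda>i. if i = 0 then (\<lambda>x. 0) else (\<lambda>x. dlact A (fst r i) (snd s i) x + dract A (snd r i) (fst s (i - 1)) x))"
  by (simp add: rep_alg_def case_prod_beta)
lemma rep_alg_zero: "azero (rep_alg A) = (\<lambda>i. azero A, \<lambda>i x. 0)"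
  by (simp add: rep_alg_def)

locale fd_algebra =
  fixes A :: "('k::field, 'a) ualg"
  assumes fd: "fd_alg A"
begin

lemma ualg: "is_ualg A" using fd unfolding fd_alg_def by auto
lemma kalg: "is_kalg A" using ualg unfolding is_ualg_def by auto

sublocale Avec: kvec "acar A" "aadd A" "azero A" "asmult A"
  using kalg unfolding is_kalg_def by unfold_locales auto

lemma mult_closed[simp]: "x \<in> acar A \<Longrightarrow> y \<in> acar A \<Longrightarrow> amul A x y \<in> acar A"
  using kalg unfolding is_kalg_def by auto
lemma r_distr: "x \<in> acar A \<Longrightarrow> y \<in> acar A \<Longrightarrow> w \<in> acar A \<Longrightarrow> amul A x (aadd A y w) = aadd A (amul A x y) (amul A x w)"
  using kalg unfolding is_kalg_def by auto
lemma l_distr: "x \<in> acar A \<Longrightarrow> y \<in> acar A \<Longrightarrow> w \<in> acar A \<Longrightarrow> amul A (aadd A x y) w = aadd A (amul A x w) (amul A y w)"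
  using kalg unfolding is_kalg_def by auto
lemma one_closed[simp]: "aone A \<in> acar A" using ualg unfolding is_ualg_def by auto
lemma l_one[simp]: "x \<in> acar A \<Longrightarrow> amul A (aone A) x = x" using ualg unfolding is_ualg_def by auto
lemma r_one[simp]: "x \<in> acar A \<Longrightarrow> amul A x (aone A) = x" using ualg unfolding is_ualg_def by auto
lemma l_null[simp]: "x \<in> acar A \<Longrightarrow> amul A (azero A) x = azero A"
proof -
  assume x: "x \<in> acar A"
  have "aadd A (amul A (azero A) x) (amul A (azero A) x) = amul A (azero A) x"
    using l_distr[of "azero A" "azero A" x] x by simp
  then show ?thesis using Avec.add_eq_self_imp_zero[OF mult_closed[OF Avec.zero_closed x] mult_closed[OF Avec.zero_closed x]] by simp
qed
lemma r_null[simp]: "x \<in> acar A \<Longrightarrow> amul A x (azero A) = azero A"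
proof -
  assume x: "x \<in> acar A"
  have "aadd A (amul A x (azero A)) (amul A x (azero A)) = amul A x (azero A)"
    using r_distr[of x "azero A" "azero A"] x by simp
  then show ?thesis using Avec.add_eq_self_imp_zero[OF mult_closed[OF x Avec.zero_closed] mult_closed[OF x Avec.zero_closed]] by simp
qed

lemma dual_add: "\<phi> \<in> dual A \<Longrightarrow> x \<in> acar A \<Longrightarrow> y \<in> acar A \<Longrightarrow> \<phi> (aadd A x y) = \<phi> x + \<phi> y"
  unfolding dual_def by auto
lemma dual_smult: "\<phi> \<in> dual A \<Longrightarrow> x \<in> acar A \<Longrightarrow> \<phi> (asmult A c x) = c * \<phi> x"
  unfolding dual_def by auto
lemma dual_outside: "\<phi> \<in> dual A \<Longrightarrow> x \<notin> acar A \<Longrightarrow> \<phi> x = 0"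
  unfolding dual_def by auto
lemma dual_zero[simp]: "\<phi> \<in> dual A \<Longrightarrow> \<phi> (azero A) = 0"
  using dual_smult[of \<phi> "azero A" 0] by simp
lemma zero_in_dual[simp]: "(\<lambda>x. 0) \<in> dual A" unfolding dual_def by auto
lemma add_in_dual: "\<phi> \<in> dual A \<Longrightarrow> \<psi> \<in> dual A \<Longrightarrow> (\<lambda>x. \<phi> x + \<psi> x) \<in> dual A"
  unfolding dual_def by (auto simp: algebra_simps)
lemma smult_in_dual: "\<phi> \<in> dual A \<Longrightarrow> (\<lambda>x. c * \<phi> x) \<in> dual A"
  unfolding dual_def by (auto simp: algebra_simps)

abbreviation "RA \<equiv> rep_alg A"

lemma rep_alg_zero_closed[simp]: "azero RA \<in> acar RA"
  by (simp add: rep_alg_carrier_iff rep_alg_zero)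

lemma rep_alg_add_closed[simp]: "r \<in> acar RA \<Longrightarrow> s \<in> acar RA \<Longrightarrow> aadd RA r s \<in> acar RA"
proof -
  assume r: "r \<in> acar RA" and s: "s \<in> acar RA"
  have f1: "{i. aadd A (fst r i) (fst s i) \<noteq> azero A} \<subseteq> {i. fst r i \<noteq> azero A} \<union> {i. fst s i \<noteq> azero A}"
    using r s by (auto simp: rep_alg_carrier_iff)
  have f2: "{i. (\<lambda>x. snd r i x + snd s i x) \<noteq> (\<lambda>x. 0)} \<subseteq> {i. snd r i \<noteq> (\<lambda>x. 0)} \<union> {i. snd s i \<noteq> (\<lambda>x. 0)}"
    by auto
  show ?thesis using r s finite_subset[OF f1] finite_subset[OF f2]
    by (auto simp: rep_alg_carrier_iff rep_alg_add add_in_dual)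
qed

lemma rep_alg_smult_closed[simp]: "r \<in> acar RA \<Longrightarrow> asmult RA c r \<in> acar RA"
proof -
  assume r: "r \<in> acar RA"
  have f1: "{i. asmult A c (fst r i) \<noteq> azero A} \<subseteq> {i. fst r i \<noteq> azero A}"
    by auto
  have f2: "{i. (\<lambda>x. c * snd r i x) \<noteq> (\<lambda>x. 0)} \<subseteq> {i. snd r i \<noteq> (\<lambda>x. 0)}"
    by auto
  show ?thesis using r finite_subset[OF f1] finite_subset[OF f2]
    by (auto simp: rep_alg_carrier_iff rep_alg_smult smult_in_dual)
qed

lemma diag_elem_closed[simp]: "a \<in> acar A \<Longrightarrow> diag_elem A i a \<in> acar RA"
proof -
  assume a: "a \<in> acar A"
  have "{k. (if k = i then a else azero A) \<noteq> azero A} \<subseteq> {i}" by auto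
  then show ?thesis using a finite_subset by (auto simp: rep_alg_carrier_iff diag_elem_def)
qed

lemma subdiag_elem_closed[simp]: "\<phi> \<in> dual A \<Longrightarrow> i \<noteq> 0 \<Longrightarrow> subdiag_elem A i \<phi> \<in> acar RA"
proof -
  assume a: "\<phi> \<in> dual A" "i \<noteq> 0"
  have "{k. (if k = i then \<phi> else (\<lambda>x. 0)) \<noteq> (\<lambda>x. 0)} \<subseteq> {i}" by auto
  then show ?thesis using a finite_subset by (auto simp: rep_alg_carrier_iff subdiag_elem_def)
qed

lemma unit_upto_closed[simp]: "unit_upto A n \<in> acar RA"
proof -
  have "{k. (if k \<le> n then aone A else azero A) \<noteq> azero A} \<subseteq> {..n}" by auto
  then show ?thesis using finite_subset by (auto simp: rep_alg_carrier_iff unit_upto_def)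
qed

lemma truncate_rows_closed[simp]: "r \<in> acar RA \<Longrightarrow> truncate_rows A n r \<in> acar RA"
proof -
  assume r: "r \<in> acar RA"
  have "{k. (if k \<le> n then fst r k else azero A) \<noteq> azero A} \<subseteq> {..n}" by auto
  moreover have "{k. (if k \<le> n then snd r k else (\<lambda>x. 0)) \<noteq> (\<lambda>x. 0)} \<subseteq> {..n}" by auto
  ultimately show ?thesis using r finite_subset by (auto simp: rep_alg_carrier_iff truncate_rows_def)
qed

lemma supported_upto_truncate_rows: "supported_upto A n (truncate_rows A n r)" unfolding supported_upto_def truncate_rows_def by auto

lemma supported_upto_mono: "supported_upto A n r \<Longrightarrow> n \<le> m \<Longrightarrow> supported_upto A m r" unfolding supported_upto_def by auto

lemma supported_upto_ex: "r \<in> acar RA \<Longrightarrow> \<exists>n. supported_upto A n r"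
proof -
  assume r: "r \<in> acar RA"
  let ?F = "{i. fst r i \<noteq> azero A} \<union> {i. snd r i \<noteq> (\<lambda>x. 0)}"
  have fin: "finite ?F" using r by (simp add: rep_alg_carrier_iff)
  have "supported_upto A (Max (insert 0 ?F)) r"
    unfolding supported_upto_def using fin by (auto dest: Max_ge[of "insert 0 ?F", simplified])
  then show ?thesis by blast
qed

lemma mult_unit_upto_right: "r \<in> acar RA \<Longrightarrow> supported_upto A n r \<Longrightarrow> amul RA r (unit_upto A n) = r"
proof -
  assume r: "r \<in> acar RA" and b: "supported_upto A n r"
  have f: "amul A (fst r i) (if i \<le> n then aone A else azero A) = fst r i" for i
    using r b by (auto simp: rep_alg_carrier_iff supported_upto_def)
  have s: "(if i = 0 then (\<lambda>x. 0) else (\<lambda>x. dlact A (fst r i) (\<lambda>x. 0) x +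
      dract A (snd r i) (if i - 1 \<le> n then aone A else azero A) x)) = snd r i" for i
  proof (cases "i = 0")
    case True then show ?thesis using r by (simp add: rep_alg_carrier_iff)
  next
    case False
    have "dract A (snd r i) (if i - 1 \<le> n then aone A else azero A) x = snd r i x" for x
    proof (cases "i \<le> n")
      case True
      then show ?thesis using r dual_outside[of "snd r i" x] by (auto simp: dract_def rep_alg_carrier_iff)
    next
      case False
      then show ?thesis using b by (auto simp: dract_def supported_upto_def)
    qed
    then show ?thesis using False by (auto simp: dlact_def)
  qed
  show ?thesis
  proof (rule prod_eqI)
    show "fst (amul RA r (unit_upto A n)) = fst r" unfolding rep_alg_mult unit_upto_def using f by auto
    show "snd (amul RA r (unit_upto A n)) = snd r"
    proof
      fix i show "snd (amul RA r (unit_upto A n)) i = snd r i" using s[of i] unfolding rep_alg_mult unit_upto_def by (simp only: fst_conv snd_conv)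
    qed
  qed
qed

lemma mult_unit_upto_left: "r \<in> acar RA \<Longrightarrow> amul RA (unit_upto A n) r = truncate_rows A n r"
proof -
  assume r: "r \<in> acar RA"
  have f: "amul A (if i \<le> n then aone A else azero A) (fst r i) = (if i \<le> n then fst r i else azero A)" for i
    using r by (auto simp: rep_alg_carrier_iff)
  have s: "(if i = 0 then (\<lambda>x. 0) else (\<lambda>x. dlact A (if i \<le> n then aone A else azero A) (snd r i) x +
      dract A (\<lambda>x. 0) (fst r (i - 1)) x)) = (if i \<le> n then snd r i else (\<lambda>x. 0))" for i
  proof (cases "i = 0")
    case True then show ?thesis using r by (simp add: rep_alg_carrier_iff)
  next
    case False
    have "dlact A (if i \<le> n then aone A else azero A) (snd r i) x = (if i \<le> n then snd r i x else 0)" for x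
      using r dual_outside[of "snd r i" x] by (auto simp: dlact_def rep_alg_carrier_iff)
    then show ?thesis using False by (auto simp: dract_def)
  qed
  show ?thesis
  proof (rule prod_eqI)
    show "fst (amul RA (unit_upto A n) r) = fst (truncate_rows A n r)" unfolding rep_alg_mult unit_upto_def truncate_rows_def using f by auto
    show "snd (amul RA (unit_upto A n) r) = snd (truncate_rows A n r)"
    proof
      fix i show "snd (amul RA (unit_upto A n) r) i = snd (truncate_rows A n r) i" using s[of i] unfolding rep_alg_mult unit_upto_def truncate_rows_def by (simp only: fst_conv snd_conv)
    qed
  qed
qed

lemma supported_upto_bound:
  assumes "finite S" "\<And>j. j \<in> S \<Longrightarrow> r j \<in> acar RA"
  obtains n where "\<And>j. j \<in> S \<Longrightarrow> supported_upto A n (r j)"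
proof -
  have "\<forall>j\<in>S. \<exists>n. supported_upto A n (r j)" using supported_upto_ex assms(2) by blast
  then obtain b where b: "\<forall>j\<in>S. supported_upto A (b j) (r j)" by (auto dest!: bchoice)
  have "b j \<le> Max (b ` S)" if "j \<in> S" for j using assms(1) that by simp
  then show ?thesis using that[of "Max (b ` S)"] b supported_upto_mono by blast
qed

lemma diag_elem_add: "diag_elem A i (aadd A a b) = aadd RA (diag_elem A i a) (diag_elem A i b)"
  by (simp add: diag_elem_def rep_alg_add fun_eq_iff)
lemma diag_elem_smult: "diag_elem A i (asmult A c a) = asmult RA c (diag_elem A i a)"
  by (simp add: diag_elem_def rep_alg_smult fun_eq_iff)
lemma subdiag_elem_add: "subdiag_elem A i (\<lambda>x. \<phi> x + \<psi> x) = aadd RA (subdiag_elem A i \<phi>) (subdiag_elem A i \<psi>)"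
  by (simp add: subdiag_elem_def rep_alg_add fun_eq_iff)
lemma subdiag_elem_smult: "subdiag_elem A i (\<lambda>x. c * \<phi> x) = asmult RA c (subdiag_elem A i \<phi>)"
  by (simp add: subdiag_elem_def rep_alg_smult fun_eq_iff)

lemma truncate_rows_0: "r \<in> acar RA \<Longrightarrow> truncate_rows A 0 r = diag_elem A 0 (fst r 0)"
  by (auto simp: truncate_rows_def diag_elem_def rep_alg_carrier_iff fun_eq_iff prod_eq_iff)

lemma truncate_rows_Suc: "r \<in> acar RA \<Longrightarrow> truncate_rows A (Suc k) r =
    aadd RA (truncate_rows A k r) (aadd RA (diag_elem A (Suc k) (fst r (Suc k))) (subdiag_elem A (Suc k) (snd r (Suc k))))"
  by (auto simp: truncate_rows_def diag_elem_def subdiag_elem_def rep_alg_carrier_iff fun_eq_iff prod_eq_iff rep_alg_add le_Suc_eq)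

lemma truncate_rows_supported: "supported_upto A n r \<Longrightarrow> truncate_rows A n r = r"
  by (auto simp: truncate_rows_def supported_upto_def fun_eq_iff prod_eq_iff)

sublocale Dvec: kvec "dual A" "\<lambda>\<phi> \<psi> x. \<phi> x + \<psi> x" "\<lambda>x. 0" "\<lambda>c \<phi> x. c * \<phi> x"
  by unfold_locales (auto simp: kvs_def add_in_dual smult_in_dual algebra_simps)

lemma fd_alg_spans: obtains bs where "Avec.spans bs"
proof -
  obtain bs where bs: "set bs \<subseteq> acar A" "\<forall>x\<in>acar A. \<exists>cs::'k list. length cs = length bs \<and>
      x = vsum (aadd A) (azero A) (map (\<lambda>(c, b). asmult A c b) (zip cs bs))"
    using fd unfolding fd_alg_def by blast
  have "\<exists>c. x = Avec.lin_comb bs c" if x: "x \<in> acar A" for x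
  proof -
    obtain cs :: "'k list" where cs: "length cs = length bs"
      "x = vsum (aadd A) (azero A) (map (\<lambda>(c, b). asmult A c b) (zip cs bs))"
      using bs(2) x by blast
    have "set (map (\<lambda>(c, b). asmult A c b) (zip cs bs)) \<subseteq> acar A"
      using bs(1) by (auto simp: set_zip)
    then have "x = vsum_upto (aadd A) (azero A) (\<lambda>t. map (\<lambda>(c, b). asmult A c b) (zip cs bs) ! t) (length bs)"
      using cs by (simp add: Avec.vsum_eq_vsum_upto)
    also have "\<dots> = Avec.lin_comb bs (\<lambda>t. cs ! t)"
      unfolding Avec.lin_comb_def using cs(1) by (intro Avec.vsum_upto_cong) simp
    finally show ?thesis by blast
  qed
  then show ?thesis using that bs(1) unfolding Avec.spans_def by blast
qed

lemma dual_lin_comb: "\<phi> \<in> dual A \<Longrightarrow> set bs \<subseteq> acar A \<Longrightarrow>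
    \<phi> (Avec.lin_comb bs c) = (\<Sum>t<length bs. c t * \<phi> (bs ! t))"
proof -
  assume \<phi>: "\<phi> \<in> dual A" and bs: "set bs \<subseteq> acar A"
  have "\<phi> (vsum_upto (aadd A) (azero A) (\<lambda>t. asmult A (c t) (bs ! t)) m) = (\<Sum>t<m. c t * \<phi> (bs ! t))"
    if "m \<le> length bs" for m
    using that by (induction m) (simp_all add: \<phi> bs dual_add dual_smult)
  then show ?thesis unfolding Avec.lin_comb_def by simp
qed

lemma dual_spans: obtains \<psi>s where "Dvec.spans \<psi>s"
proof -
  obtain bs where bs: "Avec.spans bs" using fd_alg_spans by blast
  define E where "E \<phi> = (\<lambda>t. if t < length bs then \<phi> (bs ! t) else 0)" for \<phi> :: "'a \<Rightarrow> 'k"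
  have E_add: "E (\<lambda>x. \<phi> x + \<psi> x) = E \<phi> + E \<psi>" for \<phi> \<psi> unfolding E_def by (auto simp: plus_fun_def)
  have E_smult: "E (\<lambda>x. c * \<phi> x) = cscale c (E \<phi>)" for c \<phi> unfolding E_def cscale_def by auto
  have inj: "inj_on E (dual A)"
  proof (rule inj_onI)
    fix \<phi> \<psi> assume \<phi>: "\<phi> \<in> dual A" and \<psi>: "\<psi> \<in> dual A" and "E \<phi> = E \<psi>"
    then have eq: "\<phi> (bs ! t) = \<psi> (bs ! t)" if "t < length bs" for t
      using that fun_cong[OF \<open>E \<phi> = E \<psi>\<close>, of t] unfolding E_def by simp
    show "\<phi> = \<psi>"
    proof
      fix x
      show "\<phi> x = \<psi> x"
      proof (cases "x \<in> acar A")
        case True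
        then obtain c where "x = Avec.lin_comb bs c" using bs unfolding Avec.spans_def by blast
        then show ?thesis using bs eq dual_lin_comb[OF \<phi>] dual_lin_comb[OF \<psi>]
          unfolding Avec.spans_def by simp
      next
        case False
        then show ?thesis using dual_outside[OF \<phi>] dual_outside[OF \<psi>] by simp
      qed
    qed
  qed
  have "E ` dual A \<subseteq> coeffs_below (length bs)" unfolding E_def coeffs_below_def by auto
  then obtain \<psi>s where "Dvec.spans \<psi>s"
    by (rule Dvec.spans_if_linear_embedding[OF E_add E_smult inj])
  then show ?thesis by (rule that)
qed

text \<open>Each generator is a combination of the generators with finitely supported coefficients; a
  unit_upto A n covering all their supports therefore fixes every generator.\<close>

lemma fg_rmod_fixed_generators:
  assumes M: "fg_rmod RA M"
  obtains gs n where "generated_by RA M gs (\<lambda>_. True)"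
    "\<And>j. j < length gs \<Longrightarrow> mact M (gs ! j) (unit_upto A n) = gs ! j"
proof -
  interpret rmodule RA M by (rule fg_rmod_rmodule[OF M])
  obtain gs where gs: "generated_by RA M gs (\<lambda>_. True)" by (rule fg_rmod_generators[OF M])
  let ?L = "length gs"
  note gsi = generated_byD(2)[OF gs]
  have "\<forall>j\<in>{..<?L}. \<exists>r. (\<forall>i<?L. r i \<in> acar RA) \<and>
      gs ! j = vsum_upto (madd M) (mzero M) (\<lambda>i. mact M (gs ! i) (r i)) ?L"
    using generated_byD(3)[OF gs] gsi by simp
  then obtain rr where rr: "\<And>j. j < ?L \<Longrightarrow> (\<forall>i<?L. rr j i \<in> acar RA) \<and>
      gs ! j = vsum_upto (madd M) (mzero M) (\<lambda>i. mact M (gs ! i) (rr j i)) ?L"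
    by (auto dest!: bchoice)
  obtain n where "\<And>ji. ji \<in> {..<?L} \<times> {..<?L} \<Longrightarrow> supported_upto A n (case_prod rr ji)"
    using supported_upto_bound[of "{..<?L} \<times> {..<?L}" "case_prod rr"] rr by auto
  then have n: "\<And>j i. j < ?L \<Longrightarrow> i < ?L \<Longrightarrow> supported_upto A n (rr j i)" by auto
  have "mact M (gs ! j) (unit_upto A n) = gs ! j" if j: "j < ?L" for j
  proof -
    let ?g = "vsum_upto (madd M) (mzero M) (\<lambda>i. mact M (gs ! i) (rr j i)) ?L"
    have rrj: "\<forall>i<?L. rr j i \<in> acar RA" "gs ! j = ?g" using rr[OF j] by (blast, blast)
    have "mact M (gs ! j) (unit_upto A n) = mact M ?g (unit_upto A n)"
      by (rule arg_cong[where f = "\<lambda>x. mact M x (unit_upto A n)", OF rrj(2)])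
    also have "\<dots> = vsum_upto (madd M) (mzero M) (\<lambda>i. mact M (mact M (gs ! i) (rr j i)) (unit_upto A n)) ?L"
      using gsi rrj(1) by (intro act_vsum_upto) auto
    also have "\<dots> = ?g"
      using gsi rrj(1) n[OF j] by (intro vsum_upto_cong) (simp add: act_assoc mult_unit_upto_right)
    finally show ?thesis using rrj(2) by simp
  qed
  with gs show ?thesis by (rule that)
qed

lemma fg_rmod_supported_generators:
  assumes M: "fg_rmod RA M"
  obtains gs n where "generated_by RA M gs (supported_upto A n)"
proof -
  interpret rmodule RA M by (rule fg_rmod_rmodule[OF M])
  obtain gs n where gs: "generated_by RA M gs (\<lambda>_. True)"
    and fixed: "\<And>j. j < length gs \<Longrightarrow> mact M (gs ! j) (unit_upto A n) = gs ! j"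
    by (rule fg_rmod_fixed_generators[OF M]) (rule that)
  note gsi = generated_byD(2)[OF gs]
  have "\<exists>r. (\<forall>i<length gs. r i \<in> acar RA \<and> supported_upto A n (r i)) \<and>
      m = vsum_upto (madd M) (mzero M) (\<lambda>i. mact M (gs ! i) (r i)) (length gs)" if m: "m \<in> mcar M" for m
  proof -
    obtain r where r: "\<forall>i<length gs. r i \<in> acar RA"
      "m = vsum_upto (madd M) (mzero M) (\<lambda>i. mact M (gs ! i) (r i)) (length gs)"
      using generated_byD(3)[OF gs m] by auto
    have "mact M (gs ! i) (r i) = mact M (gs ! i) (truncate_rows A n (r i))" if "i < length gs" for i
      using fixed[OF that] gsi[OF that] r(1) that
      by (metis act_assoc mult_unit_upto_left unit_upto_closed)
    then have "m = vsum_upto (madd M) (mzero M) (\<lambda>i. mact M (gs ! i) (truncate_rows A n (r i))) (length gs)"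
      using r(2) by (simp cong: vsum_upto_cong)
    then show ?thesis using r(1) supported_upto_truncate_rows truncate_rows_closed
      by (intro exI[of _ "\<lambda>i. truncate_rows A n (r i)"]) simp
  qed
  then have "generated_by RA M gs (supported_upto A n)"
    using generated_byD(1)[OF gs] unfolding generated_by_def by blast
  then show ?thesis by (rule that)
qed

lemma fg_rmod_local_unit:
  assumes M: "fg_rmod RA M"
  obtains n where "\<And>m. m \<in> mcar M \<Longrightarrow> mact M m (unit_upto A n) = m"
proof -
  interpret rmodule RA M by (rule fg_rmod_rmodule[OF M])
  obtain gs n where gs: "generated_by RA M gs (supported_upto A n)"
    by (rule fg_rmod_supported_generators[OF M])
  note gsi = generated_byD(2)[OF gs]
  have "mact M m (unit_upto A n) = m" if m: "m \<in> mcar M" for m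
  proof -
    obtain r where r: "\<forall>i<length gs. r i \<in> acar RA \<and> supported_upto A n (r i)"
      "m = vsum_upto (madd M) (mzero M) (\<lambda>i. mact M (gs ! i) (r i)) (length gs)"
      using generated_byD(3)[OF gs m] by auto
    have "mact M m (unit_upto A n) =
        vsum_upto (madd M) (mzero M) (\<lambda>i. mact M (mact M (gs ! i) (r i)) (unit_upto A n)) (length gs)"
      unfolding r(2) using gsi r(1) by (intro act_vsum_upto) auto
    also have "\<dots> = m"
      unfolding r(2) using gsi r(1) by (intro vsum_upto_cong) (simp add: act_assoc mult_unit_upto_right)
    finally show ?thesis .
  qed
  then show ?thesis by (rule that)
qed

lemma act_truncate_rows_in_lin_span:
  fixes n :: nat
  assumes M: "rmodule RA M" and g: "g \<in> mcar M" and bs: "Avec.spans bs" and \<psi>s: "Dvec.spans \<psi>s"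
  defines "W \<equiv> [mact M g (diag_elem A i b). i \<leftarrow> [0..<Suc n], b \<leftarrow> bs] @
    [mact M g (subdiag_elem A i \<psi>). i \<leftarrow> [1..<Suc n], \<psi> \<leftarrow> \<psi>s]"
  shows "set W \<subseteq> mcar M"
    and "r \<in> acar RA \<Longrightarrow> mact M g (truncate_rows A n r) \<in> kvec.lin_span (madd M) (mzero M) (msmult M) W"
proof -
  interpret rmodule RA M by (rule M)
  have bs_A: "set bs \<subseteq> acar A" and \<psi>s_D: "set \<psi>s \<subseteq> dual A"
    using bs \<psi>s unfolding Avec.spans_def Dvec.spans_def by auto
  show W_M: "set W \<subseteq> mcar M"
    unfolding W_def using g bs_A \<psi>s_D by (auto intro!: act_closed simp: subset_iff)
  have diag: "mact M g (diag_elem A i a) \<in> lin_span W" if i: "i \<le> n" and a: "a \<in> acar A" for i a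
    using g i a unfolding W_def
    by (intro Avec.linear_image_in_lin_span[OF kvec_axioms bs _ _ _ W_M[unfolded W_def]])
      (force simp: diag_elem_add diag_elem_smult act_r_distr act_smult_right simp del: upt_Suc)+
  have subdiag: "mact M g (subdiag_elem A i \<phi>) \<in> lin_span W"
    if i: "0 < i" "i \<le> n" and \<phi>: "\<phi> \<in> dual A" for i \<phi>
    using g i \<phi> unfolding W_def
    by (intro Dvec.linear_image_in_lin_span[OF kvec_axioms \<psi>s _ _ _ W_M[unfolded W_def]])
      (force simp: subdiag_elem_add subdiag_elem_smult act_r_distr act_smult_right add_in_dual smult_in_dual
        simp del: upt_Suc)+
  show "mact M g (truncate_rows A n r) \<in> lin_span W" if r: "r \<in> acar RA"
  proof -
    have "mact M g (truncate_rows A k r) \<in> lin_span W" if "k \<le> n" for k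
      using that
    proof (induction k)
      case 0
      then show ?case using diag r by (simp add: truncate_rows_0 rep_alg_carrier_iff)
    next
      case (Suc k)
      have "fst r (Suc k) \<in> acar A" "snd r (Suc k) \<in> dual A" using r by (auto simp: rep_alg_carrier_iff)
      then show ?case
        using Suc g r diag[OF Suc.prems] subdiag[OF _ Suc.prems]
        by (simp add: truncate_rows_Suc act_r_distr lin_span_add[OF W_M])
    qed
    then show ?thesis by simp
  qed
qed

lemma fg_rmod_spanned:
  assumes M: "fg_rmod RA M"
  obtains ws where "kvec.spans (mcar M) (madd M) (mzero M) (msmult M) ws"
proof -
  interpret rmodule RA M by (rule fg_rmod_rmodule[OF M])
  obtain gs n where gs: "generated_by RA M gs (supported_upto A n)"
    by (rule fg_rmod_supported_generators[OF M])
  obtain bs where bs: "Avec.spans bs" by (rule fd_alg_spans)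
  obtain \<psi>s where \<psi>s: "Dvec.spans \<psi>s" by (rule dual_spans)
  define Wg where "Wg g = [mact M g (diag_elem A i b). i \<leftarrow> [0..<Suc n], b \<leftarrow> bs] @
    [mact M g (subdiag_elem A i \<psi>). i \<leftarrow> [1..<Suc n], \<psi> \<leftarrow> \<psi>s]" for g
  define W where "W = concat (map Wg gs)"
  note Wg = act_truncate_rows_in_lin_span[where n = n, OF rmodule_axioms _ bs \<psi>s, folded Wg_def]
  have W_M: "set W \<subseteq> mcar M" unfolding W_def using Wg(1) generated_byD(1)[OF gs] by auto
  have gs_W: "mact M (gs ! i) r \<in> lin_span W"
    if "i < length gs" "r \<in> acar RA" "supported_upto A n r" for i r
  proof -
    have "gs ! i \<in> set gs" using that(1) by simp
    then have "lin_span (Wg (gs ! i)) \<subseteq> lin_span W"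
      unfolding W_def by (intro lin_span_mono[OF W_M[unfolded W_def]]) auto
    then show ?thesis using Wg(2)[of "gs ! i" r] that generated_byD(2)[OF gs] truncate_rows_supported by auto
  qed
  have "m \<in> lin_span W" if m: "m \<in> mcar M" for m
  proof -
    obtain r where r: "\<forall>i<length gs. r i \<in> acar RA \<and> supported_upto A n (r i)"
      "m = vsum_upto (madd M) (mzero M) (\<lambda>i. mact M (gs ! i) (r i)) (length gs)"
      using generated_byD(3)[OF gs m] by auto
    then show ?thesis using vsum_upto_in_lin_span[OF W_M] gs_W by simp
  qed
  then show ?thesis using that W_M unfolding spans_iff_lin_span by blast
qed

lemma fg_rmod_embeds_coeffs:
  assumes "fg_rmod RA M"
  shows "\<exists>j :: 'm \<Rightarrow> nat \<Rightarrow> 'k. inj_on j (mcar (M :: ('k, ('k, 'a) rep, 'm) rmod))"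
proof -
  interpret rmodule RA M by (rule fg_rmod_rmodule[OF assms])
  obtain ws where "spans ws" by (rule fg_rmod_spanned[OF assms])
  then show ?thesis by (rule spans_embeds_coeffs)
qed

lemma submod_fg:
  assumes M: "fg_rmod RA M" and S: "submod RA M S"
  shows "fg_rmod RA (M\<lparr>mcar := S\<rparr>)"
proof -
  interpret rmodule RA M by (rule fg_rmod_rmodule[OF M])
  obtain ws where ws: "spans ws" by (rule fg_rmod_spanned[OF M])
  have "ksubspace S" using S unfolding submod_def ksubspace_def by blast
  then obtain ss where ss: "set ss \<subseteq> S" "\<forall>x\<in>S. \<exists>c. x = lin_comb ss c"
    by (rule ksubspace_spanned[OF ws])
  obtain n where unit: "\<And>m. m \<in> mcar M \<Longrightarrow> mact M m (unit_upto A n) = m"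
    using fg_rmod_local_unit[OF M] by blast
  have ss_M: "ss ! i \<in> mcar M" if "i < length ss" for i
    using ss(1) S that unfolding submod_def by (meson nth_mem subsetD)
  have "\<exists>r. (\<forall>i<length ss. r i \<in> acar RA) \<and>
      x = vsum_upto (madd M) (mzero M) (\<lambda>i. mact M (ss ! i) (r i)) (length ss)" if x: "x \<in> S" for x
  proof -
    obtain c where c: "x = lin_comb ss c" using ss(2) x by blast
    have "x = vsum_upto (madd M) (mzero M) (\<lambda>i. mact M (ss ! i) (asmult RA (c i) (unit_upto A n))) (length ss)"
      unfolding c lin_comb_def using ss_M unit by (intro vsum_upto_cong) (simp add: act_smult_right)
    then show ?thesis by (intro exI[of _ "\<lambda>i. asmult RA (c i) (unit_upto A n)"]) simp
  qed
  then have "generated_by RA (M\<lparr>mcar := S\<rparr>) ss (\<lambda>_. True)" using ss(1) unfolding generated_by_def by simp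
  then show ?thesis by (rule fg_rmodI[OF submod_is_rmod[OF rmodule S]])
qed

lemma projective_lift:
  fixes X :: "('k, ('k, 'a) rep, 'x) rmod" and Y :: "('k, ('k, 'a) rep, 'y) rmod"
  assumes "projective_in RA P" and X: "fg_rmod RA X" and Y: "fg_rmod RA Y"
    and "hom RA X Y p" "p ` mcar X = mcar Y" "hom RA P Y h"
  shows "\<exists>h'. hom RA P X h' \<and> (\<forall>m\<in>mcar P. p (h' m) = h m)"
proof -
  obtain jX :: "'x \<Rightarrow> nat \<Rightarrow> 'k" where jX: "inj_on jX (mcar X)" using fg_rmod_embeds_coeffs[OF X] by blast
  obtain jY :: "'y \<Rightarrow> nat \<Rightarrow> 'k" where jY: "inj_on jY (mcar Y)" using fg_rmod_embeds_coeffs[OF Y] by blast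
  show ?thesis by (rule projective_lift_embeddable[OF assms(1) X Y jX jY assms(4-6)])
qed

lemma injective_extend:
  fixes X :: "('k, ('k, 'a) rep, 'x) rmod" and Y :: "('k, ('k, 'a) rep, 'y) rmod"
  assumes "injective_in RA E" and X: "fg_rmod RA X" and Y: "fg_rmod RA Y"
    and "hom RA X Y u" "inj_on u (mcar X)" "hom RA X E h"
  shows "\<exists>h'. hom RA Y E h' \<and> (\<forall>x\<in>mcar X. h' (u x) = h x)"
proof -
  obtain jX :: "'x \<Rightarrow> nat \<Rightarrow> 'k" where jX: "inj_on jX (mcar X)" using fg_rmod_embeds_coeffs[OF X] by blast
  obtain jY :: "'y \<Rightarrow> nat \<Rightarrow> 'k" where jY: "inj_on jY (mcar Y)" using fg_rmod_embeds_coeffs[OF Y] by blast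
  show ?thesis by (rule injective_extend_embeddable[OF assms(1) X Y jX jY assms(4-6)])
qed

end

section \<open>The cokernel of a projective-injective envelope\<close>

locale envelope_sequence = fd_algebra A for A :: "('k::field, 'a) ualg" +
  fixes L :: "('k, ('k, 'a) rep, 'l) rmod" and I :: "('k, ('k, 'a) rep, 'i) rmod"
    and N :: "('k, ('k, 'a) rep, 'n) rmod" and f :: "'l \<Rightarrow> 'i" and g :: "'i \<Rightarrow> 'n"
  assumes L_fg: "fg_rmod RA L" and I_fg: "fg_rmod RA I" and N_fg: "fg_rmod RA N"
    and L_indecomposable: "indecomposable RA L"
    and f_hom: "hom RA L I f" and g_hom: "hom RA I N g"
    and f_inj: "inj_on f (mcar L)" and g_surj: "g ` mcar I = mcar N"
    and ker_g: "f ` mcar L = {x \<in> mcar I. g x = mzero N}"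
    and essential: "essential_submod RA I (f ` mcar L)"
    and I_projective: "projective_in RA I" and I_injective: "injective_in RA I"
    and N_nonzero: "mcar N \<noteq> {mzero N}"
begin

sublocale LI: rmodule_pair RA L I using L_fg I_fg by (simp add: rmodule_pair_def fg_rmod_rmodule)
sublocale IN: rmodule_pair RA I N using I_fg N_fg by (simp add: rmodule_pair_def fg_rmod_rmodule)
sublocale II: rmodule_pair RA I I using I_fg by (simp add: rmodule_pair_def fg_rmod_rmodule)
sublocale LL: rmodule_pair RA L L using L_fg by (simp add: rmodule_pair_def fg_rmod_rmodule)
sublocale NN: rmodule_pair RA N N using N_fg by (simp add: rmodule_pair_def fg_rmod_rmodule)

abbreviation K :: "'i set" where
  "K \<equiv> f ` mcar L"

lemma K_submod: "submod RA I K"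
  using essential unfolding essential_submod_def by auto

lemma submod_trivial_if_disjoint_K:
  assumes V: "submod RA I V" and "V \<inter> K \<subseteq> {mzero I}"
  shows "V = {mzero I}"
proof -
  have "mzero I \<in> V" "mzero I \<in> K" using V K_submod unfolding submod_def by auto
  then have "K \<inter> V = {mzero I}" using assms(2) by auto
  then show ?thesis using essential V unfolding essential_submod_def by blast
qed

lemma hom_preserves_K:
  assumes h: "hom RA I I h" and p: "hom RA N N p" and lift: "\<forall>y\<in>mcar I. g (h y) = p (g y)"
    and x: "x \<in> mcar L"
  shows "h (f x) \<in> K"
proof -
  have fx: "f x \<in> mcar I" using LI.hom_closed[OF f_hom x] .
  then have "g (f x) = mzero N" using ker_g x by auto
  then have "g (h (f x)) = mzero N" using lift fx NN.hom_zero[OF p] by simp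
  then show ?thesis using ker_g II.hom_closed[OF h fx] by simp
qed

lemma f_eq_zero_iff: "x \<in> mcar L \<Longrightarrow> f x = mzero I \<longleftrightarrow> x = mzero L"
  using f_inj LI.hom_inj_iff[OF f_hom] LI.hom_zero[OF f_hom] by blast

lemma inj_if_ker_disjoint_K:
  assumes \<phi>: "hom RA I I \<phi>" and K0: "\<And>x. x \<in> mcar L \<Longrightarrow> \<phi> (f x) = mzero I \<Longrightarrow> x = mzero L"
  shows "inj_on \<phi> (mcar I)"
proof -
  have "{y \<in> mcar I. \<phi> y = mzero I} = {mzero I}"
  proof (rule submod_trivial_if_disjoint_K[OF II.ker_submod[OF \<phi>]], rule subsetI)
    fix y assume "y \<in> {y \<in> mcar I. \<phi> y = mzero I} \<inter> K"
    then obtain x where "x \<in> mcar L" "y = f x" "\<phi> (f x) = mzero I" by auto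
    then show "y \<in> {mzero I}" using K0 LI.hom_zero[OF f_hom] by simp
  qed
  then show ?thesis using II.hom_inj_iff[OF \<phi>] by auto
qed

definition restr :: "('i \<Rightarrow> 'i) \<Rightarrow> 'l \<Rightarrow> 'l" where
  "restr h = (\<lambda>x. the_inv_into (mcar L) f (h (f x)))"

context
  fixes h assumes h: "hom RA I I h" and hK: "\<And>x. x \<in> mcar L \<Longrightarrow> h (f x) \<in> K"
begin

lemma restr_hom: "hom RA L L (restr h)"
  and f_restr: "x \<in> mcar L \<Longrightarrow> restr h x \<in> mcar L \<and> f (restr h x) = h (f x)"
  and f_restr_funpow: "x \<in> mcar L \<Longrightarrow> f ((restr h ^^ k) x) = (h ^^ k) (f x)"
  using LI.restrict_endo[OF f_hom f_inj h hK] unfolding restr_def by auto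

lemma restr_nilpotent:
  assumes nil: "\<forall>x\<in>mcar L. (h ^^ n) (f x) = mzero I"
  shows "\<forall>x\<in>mcar L. (restr h ^^ n) x = mzero L"
proof
  fix x assume x: "x \<in> mcar L"
  then have "f ((restr h ^^ n) x) = mzero I" using f_restr_funpow[OF x] nil by simp
  then show "(restr h ^^ n) x = mzero L" using f_eq_zero_iff[OF hom_funpow_closed[OF restr_hom x]] by simp
qed

lemma surjective_if_restr_bijective:
  assumes bij: "bij_betw (restr h ^^ n) (mcar L) (mcar L)"
  shows "(h ^^ n) ` mcar I = mcar I"
proof -
  let ?hn = "h ^^ n"
  have hn: "hom RA I I ?hn" by (rule hom_funpow[OF h])
  have restr_n: "(restr h ^^ n) x \<in> mcar L" if "x \<in> mcar L" for x
    using hom_funpow_closed[OF restr_hom that] .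
  have restr_n_zero: "(restr h ^^ n) (mzero L) = mzero L" by (rule LL.hom_zero[OF hom_funpow[OF restr_hom]])
  have "inj_on ?hn (mcar I)"
  proof (rule inj_if_ker_disjoint_K[OF hn])
    fix x assume x: "x \<in> mcar L" and "?hn (f x) = mzero I"
    then have "f ((restr h ^^ n) x) = mzero I" using f_restr_funpow[OF x] by simp
    then have "(restr h ^^ n) x = (restr h ^^ n) (mzero L)"
      using f_eq_zero_iff[OF restr_n[OF x]] restr_n_zero by simp
    then show "x = mzero L" using bij x unfolding bij_betw_def by (meson LI.M.zero_closed inj_onD)
  qed
  then obtain \<rho> where \<rho>: "hom RA I I \<rho>" "\<forall>y\<in>mcar I. \<rho> (?hn y) = y"
    using injective_extend[OF I_injective I_fg I_fg hn _ hom_id] by blast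
  have \<rho>_inj: "inj_on \<rho> (mcar I)"
  proof (rule inj_if_ker_disjoint_K[OF \<rho>(1)])
    fix x assume x: "x \<in> mcar L" and "\<rho> (f x) = mzero I"
    obtain z where z: "z \<in> mcar L" "x = (restr h ^^ n) z" using bij x unfolding bij_betw_def by blast
    then have "f x = ?hn (f z)" using f_restr_funpow by simp
    then have "f z = mzero I" using \<open>\<rho> (f x) = mzero I\<close> \<rho>(2) LI.hom_closed[OF f_hom z(1)] by simp
    then show "x = mzero L" using z f_eq_zero_iff restr_n_zero by simp
  qed
  have "y \<in> ?hn ` mcar I" if y: "y \<in> mcar I" for y
  proof -
    have "\<rho> y \<in> mcar I" "?hn (\<rho> y) \<in> mcar I" using y II.hom_closed[OF \<rho>(1)] II.hom_closed[OF hn] by auto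
    moreover have "\<rho> (?hn (\<rho> y)) = \<rho> y" using \<rho>(2) \<open>\<rho> y \<in> mcar I\<close> by simp
    ultimately have "?hn (\<rho> y) = y" using \<rho>_inj y by (meson inj_onD)
    then show ?thesis using \<open>\<rho> y \<in> mcar I\<close> by (metis image_eqI)
  qed
  then show ?thesis using II.hom_closed[OF hn] by auto
qed

lemma nilpotent_on_K_or_surjective:
  obtains (nilpotent) n where "\<forall>x\<in>mcar L. (h ^^ n) (f x) = mzero I"
  | (surjective) n where "0 < n" "(h ^^ n) ` mcar I = mcar I"
proof -
  obtain ws where ws: "LI.M.spans ws" by (rule fg_rmod_spanned[OF L_fg])
  show ?thesis
  proof (rule LI.M.fitting_lemma[OF ws L_indecomposable restr_hom])
    fix n assume "\<forall>x\<in>mcar L. (restr h ^^ n) x = mzero L"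
    then have "\<forall>x\<in>mcar L. (h ^^ n) (f x) = mzero I"
      by (simp add: f_restr_funpow[symmetric] LI.hom_zero[OF f_hom])
    then show ?thesis by (rule that(1))
  next
    fix n assume "0 < n" "bij_betw (restr h ^^ n) (mcar L) (mcar L)"
    then show ?thesis using that(2) surjective_if_restr_bijective by blast
  qed
qed

end

lemma nilpotent_if_into_K:
  assumes \<phi>: "hom RA I I \<phi>" and into_K: "\<phi> ` mcar I \<subseteq> K"
  obtains n where "\<forall>y\<in>mcar I. (\<phi> ^^ n) y = mzero I"
proof -
  have \<phi>K: "\<And>x. x \<in> mcar L \<Longrightarrow> \<phi> (f x) \<in> K" using into_K LI.hom_closed[OF f_hom] by auto
  show ?thesis
  proof (rule nilpotent_on_K_or_surjective[OF \<phi> \<phi>K])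
    fix n assume nilpotent: "\<forall>x\<in>mcar L. (\<phi> ^^ n) (f x) = mzero I"
    have "\<forall>y\<in>mcar I. (\<phi> ^^ Suc n) y = mzero I"
    proof
      fix y assume "y \<in> mcar I"
      then obtain x where "x \<in> mcar L" "\<phi> y = f x" using into_K by auto
      then show "(\<phi> ^^ Suc n) y = mzero I" using nilpotent by (simp add: funpow_Suc_right del: funpow.simps)
    qed
    then show ?thesis by (rule that)
  next
    fix n assume "0 < n" and surj: "(\<phi> ^^ n) ` mcar I = mcar I"
    then obtain m where n: "n = Suc m" using gr0_implies_Suc by blast
    have "mcar I = \<phi> ` ((\<phi> ^^ m) ` mcar I)" using surj unfolding n by (simp add: image_comp)
    also have "\<dots> \<subseteq> \<phi> ` mcar I" using hom_funpow_closed[OF \<phi>] by blast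
    finally have "mcar I \<subseteq> \<phi> ` mcar I" .
    then have "mcar I \<subseteq> K" using into_K by blast
    have "mcar N \<subseteq> {mzero N}"
    proof
      fix z assume "z \<in> mcar N"
      then obtain y where "y \<in> mcar I" "z = g y" using g_surj by auto
      then show "z \<in> {mzero N}" using \<open>mcar I \<subseteq> K\<close> ker_g by auto
    qed
    then show ?thesis using N_nonzero IN.N.zero_closed by blast
  qed
qed

lemma supplement_of_K_maps_onto:
  assumes U: "submod RA I U" and sum: "msum_set I K U = mcar I"
  shows "g ` U = mcar N"
proof
  show "g ` U \<subseteq> mcar N" using U IN.hom_closed[OF g_hom] unfolding submod_def by auto
  show "mcar N \<subseteq> g ` U"
  proof
    fix z assume "z \<in> mcar N"
    then obtain y where y: "y \<in> mcar I" "z = g y" using g_surj by auto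
    then obtain k u where ku: "k \<in> K" "u \<in> U" "y = madd I k u"
      using sum unfolding msum_set_def by blast
    have "k \<in> mcar I" "g k = mzero N" "u \<in> mcar I"
      using ku(1,2) ker_g U unfolding submod_def by auto
    then have "z = g u" using y ku(3) IN.hom_add[OF g_hom] IN.hom_closed[OF g_hom] by simp
    then show "z \<in> g ` U" using ku(2) by blast
  qed
qed

lemma ker_superfluous: "superfluous_submod RA I {x \<in> mcar I. g x = mzero N}"
  unfolding superfluous_submod_def ker_g[symmetric]
proof (intro conjI allI impI)
  show "submod RA I K" by (rule K_submod)
  fix U assume "submod RA I U \<and> msum_set I K U = mcar I"
  then have U: "submod RA I U" and sum: "msum_set I K U = mcar I" by auto
  have UI: "U \<subseteq> mcar I" using U unfolding submod_def by auto
  obtain h where h: "hom RA I (I\<lparr>mcar := U\<rparr>) h" "\<forall>y\<in>mcar I. g (h y) = g y"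
    using projective_lift[OF I_projective submod_fg[OF I_fg U] N_fg
        hom_restrict_domain[OF g_hom UI] _ g_hom] supplement_of_K_maps_onto[OF U sum] by auto
  have hI: "hom RA I I h" and hU: "\<And>y. y \<in> mcar I \<Longrightarrow> h y \<in> U"
    using hom_widen_codomain[OF h(1) UI] h(1) unfolding hom_def by auto
  define \<phi> where "\<phi> y = LI.N.vdiff y (h y)" for y
  have \<phi>: "hom RA I I \<phi>" unfolding \<phi>_def by (rule II.hom_vdiff_fun[OF hom_id hI])
  have "\<phi> ` mcar I \<subseteq> K"
  proof
    fix z assume "z \<in> \<phi> ` mcar I"
    then obtain y where y: "y \<in> mcar I" "z = \<phi> y" by auto
    then have "g z = mzero N"
      using IN.hom_vdiff[OF g_hom y(1) II.hom_closed[OF hI y(1)]] h(2) IN.hom_closed[OF g_hom]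
      unfolding \<phi>_def by simp
    then show "z \<in> K" using ker_g y II.hom_closed[OF \<phi>] by auto
  qed
  then obtain n where "\<forall>y\<in>mcar I. (\<phi> ^^ n) y = mzero I" by (rule nilpotent_if_into_K[OF \<phi>])
  moreover have "LI.N.vdiff y (\<phi> y) = h y" if "y \<in> mcar I" for y
    unfolding \<phi>_def using that II.hom_closed[OF hI that]
    by (metis LI.N.a_comm LI.N.add_vdiff_cancel LI.N.vdiff_add_cancel LI.N.vdiff_closed)
  ultimately show "U = mcar I"
    using LI.N.nilpotent_complement_submod[OF \<phi> _ U] hU by simp
qed

lemma lift_of_projection_restr_nilpotent:
  assumes h: "hom RA I I h" and p: "hom RA N N p" and lift: "\<forall>y\<in>mcar I. g (h y) = p (g y)"
    and onto: "\<forall>z\<in>mcar N. p z \<in> Nj" and id: "\<forall>z\<in>Nj. p z = z" and proper: "\<not> mcar N \<subseteq> Nj"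
  obtains n where "\<forall>x\<in>mcar L. (restr h ^^ n) x = mzero L"
proof (rule nilpotent_on_K_or_surjective[OF h hom_preserves_K[OF h p lift]])
  fix n assume "\<forall>x\<in>mcar L. (h ^^ n) (f x) = mzero I"
  then show ?thesis using that restr_nilpotent[OF h hom_preserves_K[OF h p lift]] by blast
next
  fix n assume surjective: "0 < n" "(h ^^ n) ` mcar I = mcar I"
  have lift_pow: "g ((h ^^ Suc k) y) = p (g y)" if y: "y \<in> mcar I" for k y
  proof (induction k)
    case (Suc k)
    then show ?case using lift onto id hom_funpow_closed[OF h y, of "Suc k"] IN.hom_closed[OF g_hom y]
      by simp
  qed (use lift y in simp)
  obtain m where n: "n = Suc m" using surjective(1) gr0_implies_Suc by blast
  have "mcar N \<subseteq> Nj"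
  proof
    fix z assume "z \<in> mcar N"
    then obtain y where y: "y \<in> mcar I" "z = g y" using g_surj by auto
    then obtain w where w: "w \<in> mcar I" "y = (h ^^ n) w" using surjective(2) by auto
    then have "z = p (g w)" using y lift_pow[OF w(1), of m] n by simp
    then show "z \<in> Nj" using onto IN.hom_closed[OF g_hom w(1)] by simp
  qed
  then show ?thesis using proper by blast
qed

lemma restr_sum_id:
  assumes h1: "hom RA I I h1" and h2: "hom RA I I h2"
    and K1: "\<And>x. x \<in> mcar L \<Longrightarrow> h1 (f x) \<in> K" and K2: "\<And>x. x \<in> mcar L \<Longrightarrow> h2 (f x) \<in> K"
    and sum: "\<forall>y\<in>mcar I. madd I (h1 y) (h2 y) = y" and x: "x \<in> mcar L"
  shows "madd L (restr h1 x) (restr h2 x) = x"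
proof (rule inj_onD[OF f_inj])
  show "f (madd L (restr h1 x) (restr h2 x)) = f x"
    using f_restr[OF h1 K1 x] f_restr[OF h2 K2 x] sum LI.hom_add[OF f_hom] LI.hom_closed[OF f_hom x]
    by simp
qed (use x f_restr[OF h1 K1 x] f_restr[OF h2 K2 x] in auto)

lemma N_indecomposable: "indecomposable RA N"
  unfolding indecomposable_def
proof (intro conjI allI impI)
  show "mcar N \<noteq> {mzero N}" by (rule N_nonzero)
  fix N1 N2 assume "submod RA N N1 \<and> submod RA N N2 \<and> N1 \<inter> N2 = {mzero N} \<and> msum_set N N1 N2 = mcar N"
  then have N1: "submod RA N N1" and N2: "submod RA N N2" and int: "N1 \<inter> N2 = {mzero N}"
    and sum: "msum_set N N1 N2 = mcar N" by auto
  show "N1 = {mzero N} \<or> N2 = {mzero N}"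
  proof (rule ccontr)
    assume "\<not> (N1 = {mzero N} \<or> N2 = {mzero N})"
    then have proper: "\<not> mcar N \<subseteq> N1" "\<not> mcar N \<subseteq> N2"
      using IN.N.not_subset_direct_summand[OF N2 int] IN.N.not_subset_direct_summand[OF N1]
        int by (auto simp: Int_commute)
    obtain p1 where p1: "hom RA N N p1" "\<forall>z\<in>mcar N. p1 z \<in> N1 \<and> IN.N.vdiff z (p1 z) \<in> N2"
        "\<forall>a\<in>N1. p1 a = a" "\<forall>b\<in>N2. p1 b = mzero N"
      by (rule IN.N.direct_sum_projection[OF N1 N2 int sum])
    define p2 where "p2 z = IN.N.vdiff z (p1 z)" for z
    have p2: "hom RA N N p2" unfolding p2_def by (rule NN.hom_vdiff_fun[OF hom_id p1(1)])
    have p2_id: "\<forall>b\<in>N2. p2 b = b"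
      using p1(4) N2 unfolding p2_def submod_def by (auto simp: subset_iff)
    obtain h1 where h1: "hom RA I I h1" "\<forall>y\<in>mcar I. g (h1 y) = p1 (g y)"
      using projective_lift[OF I_projective I_fg N_fg g_hom g_surj hom_comp[OF g_hom p1(1)]] by blast
    define h2 where "h2 y = LI.N.vdiff y (h1 y)" for y
    have h2: "hom RA I I h2" unfolding h2_def by (rule II.hom_vdiff_fun[OF hom_id h1(1)])
    have h2_lift: "\<forall>y\<in>mcar I. g (h2 y) = p2 (g y)"
      using IN.hom_vdiff[OF g_hom] II.hom_closed[OF h1(1)] h1(2) unfolding h2_def p2_def by simp
    obtain n1 where n1: "\<forall>x\<in>mcar L. (restr h1 ^^ n1) x = mzero L"
      by (rule lift_of_projection_restr_nilpotent[OF h1(1) p1(1) h1(2) _ p1(3) proper(1)])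
        (use p1(2) in blast)
    obtain n2 where n2: "\<forall>x\<in>mcar L. (restr h2 ^^ n2) x = mzero L"
      by (rule lift_of_projection_restr_nilpotent[OF h2 p2 h2_lift _ p2_id proper(2)])
        (use p1(2) p2_def in simp)
    note K1 = hom_preserves_K[OF h1(1) p1(1) h1(2)] and K2 = hom_preserves_K[OF h2 p2 h2_lift]
    have "\<forall>y\<in>mcar I. madd I (h1 y) (h2 y) = y"
      unfolding h2_def by (simp add: LI.N.add_vdiff_cancel_left II.hom_closed[OF h1(1)])
    then have "mcar L = {mzero L}"
      using LI.M.nilpotent_sum_id_trivial[OF restr_hom[OF h1(1) K1] restr_hom[OF h2 K2] _ n1 n2]
        restr_sum_id[OF h1(1) h2 K1 K2] by blast
    then show False using L_indecomposable unfolding indecomposable_def by blast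
  qed
qed

end

theorem lemma2p2:
  fixes A :: "('k::field, 'a) ualg"
    and L :: "('k, ('k, 'a) rep, 'l) rmod"
    and I :: "('k, ('k, 'a) rep, 'i) rmod"
    and N :: "('k, ('k, 'a) rep, 'n) rmod"
    and f :: "'l \<Rightarrow> 'i" and g :: "'i \<Rightarrow> 'n"
  assumes "alg_closed_field TYPE('k)"
    and "fd_alg A" and "basic_alg A" and "connected_alg A" and "hereditary_alg A"
    and "fg_rmod (rep_alg A) L" and "fg_rmod (rep_alg A) I" and "fg_rmod (rep_alg A) N"
    and "indecomposable (rep_alg A) L"
    and "hom (rep_alg A) L I f" and "hom (rep_alg A) I N g"
    and "inj_on f (mcar L)" and "g ` mcar I = mcar N"
    and "f ` mcar L = {x \<in> mcar I. g x = mzero N}"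
    and "injective_envelope (rep_alg A) L I f"
    and "projective_in (rep_alg A) I" and "injective_in (rep_alg A) I"
    and "mcar N \<noteq> {mzero N}"
  shows "projective_cover (rep_alg A) I N g \<and> indecomposable (rep_alg A) N"
proof -
  interpret envelope_sequence A L I N f g
    using assms unfolding injective_envelope_def by unfold_locales auto
  show ?thesis
    using ker_superfluous N_indecomposable assms unfolding projective_cover_def by auto
qed

end
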